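(* For $n\ge1$, the height one prime ideals of $\mathbb{S}_n$ are exactly $\mathfrak p_1,\dots,\mathfrak p_n$. These are $n$ pairwise distinct and pairwise incomparable primes, and $\mathfrak p_1\cap\cdots\cap\mathfrak p_n=\mathfrak p_1\cdots\mathfrak p_n=F(1)\otimes\cdots\otimes F(n)$.
   Context: $K$ is a field. $\mathbb{S}_n$ is the $K$-algebra generated by $x_1,\dots,x_n,y_1,\dots,y_n$ subject to the defining relations $y_ix_i=1$ for all $i$, and $[x_i,y_j]=[x_i,x_j]=[y_i,y_j]=0$ for all $i\ne j$. For each $i$, $\mathbb{S}_1(i)$ is the subalgebra generated by $x_i,y_i$, and $\mathbb{S}_n=\mathbb{S}_1(1)\otimes\cdots\otimes\mathbb{S}_1(n)$. $F(i)=\bigoplus_{k,l\in\mathbb N}K(x_i^ky_i^l-x_i^{k+1}y_i^{l+1})$ is an ideal of $\mathbb{S}_1(i)$. Define $\mathfrak p_i=\mathbb{S}_1(1)\otimes\cdots\otimes\mathbb{S}_1(i-1)\otimes F(i)\otimes\mathbb{S}_1(i+1)\otimes\cdots\otimes\mathbb{S}_1(n)$; then $\mathbb{S}_n/\mathfrak p_i\cong\big(\bigotimes_{j\ne i}\mathbb{S}_1(j)\big)\otimes K[x_i,x_i^{-1}]$. The height of a prime is the supremum of lengths of strictly descending chains of primes starting from it. *)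

theory Defs
  imports Main "HOL-Library.Extended_Nat"
begin

text \<open>Concrete model of the Jacobson algebra S_n over a field 'k.
  A monomial x^alpha y^beta (alpha, beta in N^n) is a pair of functions nat => nat
  vanishing outside {0..<n}; variable indices are 0..n-1 (paper: 1..n).
  Since y_i x_i = 1, the words x^alpha y^beta form a K-basis of S_n, and
  (x^a y^b)(x^c y^d) = x^(a + (c - b)) y^(d + (b - c)) componentwise (truncated subtraction).\<close>

type_synonym monom = "(nat \<Rightarrow> nat) \<times> (nat \<Rightarrow> nat)"

definition monset :: "nat \<Rightarrow> monom set" where
  "monset n = {(a, b). \<forall>i\<ge>n. a i = 0 \<and> b i = 0}"

definition mmul :: "monom \<Rightarrow> monom \<Rightarrow> monom" where
  "mmul p q = ((\<lambda>i. fst p i + (fst q i - snd p i)), (\<lambda>i. snd q i + (snd p i - fst q i)))"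

definition Sn :: "nat \<Rightarrow> (monom \<Rightarrow> 'k::field) set" where
  "Sn n = {f. finite {m. f m \<noteq> 0} \<and> (\<forall>m. f m \<noteq> 0 \<longrightarrow> m \<in> monset n)}"

definition Smult :: "(monom \<Rightarrow> 'k::field) \<Rightarrow> (monom \<Rightarrow> 'k) \<Rightarrow> (monom \<Rightarrow> 'k)" where
  "Smult f g = (\<lambda>m. \<Sum>(p, q)\<in>{(p, q). f p \<noteq> 0 \<and> g q \<noteq> 0 \<and> mmul p q = m}. f p * g q)"

definition Sone :: "monom \<Rightarrow> 'k::field" where
  "Sone = (\<lambda>m. if m = ((\<lambda>_. 0), (\<lambda>_. 0)) then 1 else 0)"

definition emon :: "monom \<Rightarrow> monom \<Rightarrow> 'k::field" where
  "emon m = (\<lambda>m'. if m' = m then 1 else 0)"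

definition sing :: "nat \<Rightarrow> nat \<Rightarrow> nat \<Rightarrow> monom" where
  "sing i k l = ((\<lambda>j. if j = i then k else 0), (\<lambda>j. if j = i then l else 0))"

definition mono1 :: "nat \<Rightarrow> nat \<Rightarrow> nat \<Rightarrow> monom \<Rightarrow> 'k::field" where
  "mono1 i k l = emon (sing i k l)"

text \<open>The spanning element x_i^k y_i^l - x_i^(k+1) y_i^(l+1) of F(i).\<close>
definition gen1 :: "nat \<Rightarrow> nat \<Rightarrow> nat \<Rightarrow> monom \<Rightarrow> 'k::field" where
  "gen1 i k l = (\<lambda>m. emon (sing i k l) m - emon (sing i (Suc k) (Suc l)) m)"

definition prodlist :: "(monom \<Rightarrow> 'k::field) list \<Rightarrow> monom \<Rightarrow> 'k" where
  "prodlist fs = foldr Smult fs Sone"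

definition lin_span :: "(monom \<Rightarrow> 'k::field) set \<Rightarrow> (monom \<Rightarrow> 'k) set" where
  "lin_span G = {f. \<exists>M c. finite M \<and> M \<subseteq> G \<and> f = (\<lambda>x. \<Sum>g\<in>M. c g * g x)}"

definition is_ideal :: "nat \<Rightarrow> (monom \<Rightarrow> 'k::field) set \<Rightarrow> bool" where
  "is_ideal n I \<longleftrightarrow> I \<subseteq> Sn n \<and> (\<lambda>_. 0) \<in> I
     \<and> (\<forall>f\<in>I. \<forall>g\<in>I. (\<lambda>m. f m + g m) \<in> I)
     \<and> (\<forall>f\<in>I. (\<lambda>m. - f m) \<in> I)
     \<and> (\<forall>f\<in>I. \<forall>r\<in>Sn n. Smult r f \<in> I \<and> Smult f r \<in> I)"

definition iprod :: "nat \<Rightarrow> (monom \<Rightarrow> 'k::field) set \<Rightarrow> (monom \<Rightarrow> 'k) set \<Rightarrow> (monom \<Rightarrow> 'k) set" where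
  "iprod n I J = \<Inter>{L. is_ideal n L \<and> (\<forall>a\<in>I. \<forall>b\<in>J. Smult a b \<in> L)}"

definition is_prime :: "nat \<Rightarrow> (monom \<Rightarrow> 'k::field) set \<Rightarrow> bool" where
  "is_prime n P \<longleftrightarrow> is_ideal n P \<and> P \<noteq> Sn n \<and>
     (\<forall>I J. is_ideal n I \<and> is_ideal n J \<and> iprod n I J \<subseteq> P \<longrightarrow> I \<subseteq> P \<or> J \<subseteq> P)"

definition height :: "nat \<Rightarrow> (monom \<Rightarrow> 'k::field) set \<Rightarrow> enat" where
  "height n P = (SUP k \<in> {k. \<exists>Q. Q 0 = P \<and> (\<forall>i\<le>k. is_prime n (Q i)) \<and> (\<forall>i<k. Q (Suc i) \<subset> Q i)}. enat k)"

text \<open>p_i = S_1(1) (x) ... (x) F(i) (x) ... (x) S_1(n) (index i in 0..n-1).\<close>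
definition pp :: "nat \<Rightarrow> nat \<Rightarrow> (monom \<Rightarrow> 'k::field) set" where
  "pp n i = lin_span {prodlist (map (\<lambda>j. if j = i then gen1 j (a j) (b j) else mono1 j (a j) (b j)) [0..<n]) | a b. True}"

definition Ftens :: "nat \<Rightarrow> (monom \<Rightarrow> 'k::field) set" where
  "Ftens n = lin_span {prodlist (map (\<lambda>j. gen1 j (a j) (b j)) [0..<n]) | a b. True}"

definition pp_prod :: "nat \<Rightarrow> (monom \<Rightarrow> 'k::field) set" where
  "pp_prod n = foldr (\<lambda>i acc. iprod n (pp n i) acc) [0..<n] (Sn n)"

end

theory Submission
  imports Defs
begin

text \<open>The words \<open>x\<^sup>\<alpha> y\<^sup>\<beta>\<close> form a basis of \<open>S\<^sub>n\<close>, so all computations reduce to pushforwards of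
  coefficients along maps of monomials. The ideal \<open>p\<^sub>i\<close> is the kernel of the map
  \<open>S\<^sub>n \<rightarrow> (\<Otimes>\<^sub>j\<^sub>\<noteq>\<^sub>i S\<^sub>1(j)) \<otimes> K[x\<^sub>i, x\<^sub>i\<^sup>-\<^sup>1]\<close>, which on monomials only remembers \<open>\<alpha>\<^sub>i - \<beta>\<^sub>i\<close> of the
  \<open>i\<close>-th exponents; this map is multiplicative, and a descent on \<open>min \<alpha>\<^sub>i \<beta>\<^sub>i\<close> shows that its
  kernel is spanned by the generators of \<open>p\<^sub>i\<close>. The kernel is prime: an ideal not contained in
  it has an element whose image has a nonzero coefficient at a pure power of \<open>x\<^sub>i\<close>; multiplying
  by the idempotents \<open>1 - x\<^sub>j y\<^sub>j\<close> (\<open>j \<noteq> i\<close>) from the right resp. the left removes from the image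
  all monomials whose other exponents are pure powers of \<open>y\<close>'s resp. of \<open>x\<close>'s, and then the
  top powers of \<open>x\<^sub>i\<close> in a product multiply. Moving the monomial of least degree of an element
  to \<open>1\<close> and sandwiching the result between all these idempotents shows that every nonzero
  ideal contains \<open>\<Prod>\<^sub>j (1 - x\<^sub>j y\<^sub>j)\<close>, hence contains \<open>F(1) \<otimes> \<dots> \<otimes> F(n)\<close>, which in turn
  contains \<open>\<Inter>\<^sub>i p\<^sub>i\<close> by a descent on \<open>\<Sum>\<^sub>j min \<alpha>\<^sub>j \<beta>\<^sub>j\<close>. So every nonzero prime contains some \<open>p\<^sub>i\<close>;
  as \<open>0\<close> is prime and the \<open>p\<^sub>i\<close> are pairwise incomparable, the \<open>p\<^sub>i\<close> are exactly the primes of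
  height one.\<close>

definition pushforward :: "('a \<Rightarrow> 'b) \<Rightarrow> ('a \<Rightarrow> 'k::field) \<Rightarrow> 'b \<Rightarrow> 'k" where
  "pushforward \<tau> f y = (\<Sum>x\<in>{x. f x \<noteq> 0 \<and> \<tau> x = y}. f x)"

lemma pushforward_eq_sum:
  assumes "finite A" "{x. f x \<noteq> 0 \<and> \<tau> x = y} \<subseteq> A"
  shows "pushforward \<tau> f y = (\<Sum>x\<in>A. if \<tau> x = y then f x else 0)"
proof -
  have "(\<Sum>x\<in>A. if \<tau> x = y then f x else 0) = (\<Sum>x\<in>{x\<in>A. \<tau> x = y}. f x)"
    using assms(1) by (simp add: sum.inter_filter)
  also have "\<dots> = (\<Sum>x\<in>{x. f x \<noteq> 0 \<and> \<tau> x = y}. f x)"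
    by (rule sum.mono_neutral_right) (use assms in auto)
  finally show ?thesis unfolding pushforward_def by simp
qed

lemma pushforward_eq_sum_support:
  "finite {x. f x \<noteq> 0} \<Longrightarrow> pushforward \<tau> f y = (\<Sum>x | f x \<noteq> 0. if \<tau> x = y then f x else 0)"
  by (rule pushforward_eq_sum) auto

lemma pushforward_single:
  assumes "\<forall>x. f x \<noteq> 0 \<longrightarrow> \<tau> x = y \<longrightarrow> x = a"
  shows "pushforward \<tau> f y = (if \<tau> a = y then f a else 0)"
proof -
  have "{x. f x \<noteq> 0 \<and> \<tau> x = y} = (if f a \<noteq> 0 \<and> \<tau> a = y then {a} else {})"
    using assms by auto
  then show ?thesis unfolding pushforward_def by auto
qed

lemma pushforward_finite_fibre:
  assumes "finite {x. \<tau> x = y}"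
  shows "pushforward \<tau> f y = (\<Sum>x | \<tau> x = y. f x)"
proof -
  have "(\<Sum>x | \<tau> x = y. f x) = (\<Sum>x\<in>{x. f x \<noteq> 0 \<and> \<tau> x = y}. f x)"
    by (rule sum.mono_neutral_right[OF assms]) auto
  then show ?thesis unfolding pushforward_def by simp
qed

lemma pushforward_fibre_cong:
  "(\<And>x. \<tau> x = y \<Longrightarrow> f x = g x) \<Longrightarrow> pushforward \<tau> f y = pushforward \<tau> g y"
  unfolding pushforward_def by (rule sum.cong) auto

lemma pushforward_eq_0:
  "(\<And>x. f x \<noteq> 0 \<Longrightarrow> \<tau> x \<noteq> y) \<Longrightarrow> pushforward \<tau> f y = 0"
proof -
  assume "\<And>x. f x \<noteq> 0 \<Longrightarrow> \<tau> x \<noteq> y"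
  then have "{x. f x \<noteq> 0 \<and> \<tau> x = y} = {}" by blast
  then show ?thesis unfolding pushforward_def by (simp only: sum.empty)
qed

lemma pushforward_zero [simp]: "pushforward \<tau> (\<lambda>_. 0 :: 'k::field) = (\<lambda>_. 0)"
  unfolding pushforward_def by auto

lemma pushforward_id [simp]: "pushforward (\<lambda>x. x) f = f"
proof
  fix y show "pushforward (\<lambda>x. x) f y = f y"
    by (subst pushforward_single[where a = y]) auto
qed

lemma support_pushforward: "{y. pushforward \<tau> f y \<noteq> 0} \<subseteq> \<tau> ` {x. f x \<noteq> 0}"
proof
  fix y assume "y \<in> {y. pushforward \<tau> f y \<noteq> 0}"
  then show "y \<in> \<tau> ` {x. f x \<noteq> 0}"
    using pushforward_eq_0[of f \<tau> y] by blast
qed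

lemma finite_support_pushforward:
  "finite {x. f x \<noteq> 0} \<Longrightarrow> finite {y. pushforward \<tau> f y \<noteq> 0}"
  by (rule finite_subset[OF support_pushforward finite_imageI])

lemma pushforward_comp:
  assumes fin: "finite {x. f x \<noteq> 0}"
  shows "pushforward \<phi> (pushforward \<tau> f) = pushforward (\<phi> \<circ> \<tau>) f"
proof
  fix z
  let ?A = "{x. f x \<noteq> 0}" let ?B = "\<tau> ` ?A"
  have "pushforward \<phi> (pushforward \<tau> f) z = (\<Sum>y\<in>?B. if \<phi> y = z then pushforward \<tau> f y else 0)"
    by (rule pushforward_eq_sum[OF finite_imageI[OF fin]]) (use support_pushforward[of \<tau> f] in blast)
  also have "\<dots> = (\<Sum>y\<in>?B. \<Sum>x\<in>?A. if \<phi> y = z \<and> \<tau> x = y then f x else 0)"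
    by (rule sum.cong) (simp_all add: pushforward_eq_sum_support[OF fin])
  also have "\<dots> = (\<Sum>x\<in>?A. \<Sum>y\<in>?B. if \<phi> y = z \<and> \<tau> x = y then f x else 0)"
    by (rule sum.swap)
  also have "\<dots> = (\<Sum>x\<in>?A. if (\<phi> \<circ> \<tau>) x = z then f x else 0)"
  proof (rule sum.cong[OF refl])
    fix x assume x: "x \<in> ?A"
    have "(\<Sum>y\<in>?B. if \<phi> y = z \<and> \<tau> x = y then f x else 0)
        = (\<Sum>y\<in>?B. if \<tau> x = y then (if \<phi> (\<tau> x) = z then f x else 0) else 0)"
      by (rule sum.cong) auto
    also have "\<dots> = (if (\<phi> \<circ> \<tau>) x = z then f x else 0)"
      using x fin by (simp add: sum.delta)
    finally show "(\<Sum>y\<in>?B. if \<phi> y = z \<and> \<tau> x = y then f x else 0) = (if (\<phi> \<circ> \<tau>) x = z then f x else 0)" .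
  qed
  also have "\<dots> = pushforward (\<phi> \<circ> \<tau>) f z"
    by (rule pushforward_eq_sum_support[OF fin, symmetric])
  finally show "pushforward \<phi> (pushforward \<tau> f) z = pushforward (\<phi> \<circ> \<tau>) f z" .
qed

lemma pushforward_tensor:
  assumes ff: "finite {x. f x \<noteq> 0}" and fg: "finite {x. g x \<noteq> 0}"
  shows "pushforward (map_prod \<phi> \<psi>) (\<lambda>(p, q). f p * g q) (u, v)
    = pushforward \<phi> f u * pushforward \<psi> g v"
proof -
  let ?A = "{x. f x \<noteq> 0}" let ?B = "{x. g x \<noteq> 0}"
  have "pushforward (map_prod \<phi> \<psi>) (\<lambda>(p, q). f p * g q) (u, v)
      = (\<Sum>pq\<in>?A \<times> ?B. if map_prod \<phi> \<psi> pq = (u, v) then (\<lambda>(p, q). f p * g q) pq else 0)"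
    by (rule pushforward_eq_sum) (use ff fg in auto)
  also have "\<dots> = (\<Sum>p\<in>?A. \<Sum>q\<in>?B. (if \<phi> p = u then f p else 0) * (if \<psi> q = v then g q else 0))"
    by (simp add: sum.cartesian_product) (rule sum.cong, auto)
  also have "\<dots> = (\<Sum>p\<in>?A. if \<phi> p = u then f p else 0) * (\<Sum>q\<in>?B. if \<psi> q = v then g q else 0)"
    by (simp add: sum_product)
  also have "\<dots> = pushforward \<phi> f u * pushforward \<psi> g v"
    by (simp add: pushforward_eq_sum_support[OF ff] pushforward_eq_sum_support[OF fg])
  finally show ?thesis .
qed

lemma pushforward_lin:
  assumes ff: "finite {x. f x \<noteq> 0}" and fg: "finite {x. g x \<noteq> 0}"
  shows "pushforward \<tau> (\<lambda>x. a * f x + b * g x) y = a * pushforward \<tau> f y + b * pushforward \<tau> g y"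
proof -
  let ?A = "{x. f x \<noteq> 0} \<union> {x. g x \<noteq> 0}"
  have fA: "finite ?A" using ff fg by simp
  have "pushforward \<tau> (\<lambda>x. a * f x + b * g x) y = (\<Sum>x\<in>?A. if \<tau> x = y then a * f x + b * g x else 0)"
    by (rule pushforward_eq_sum[OF fA]) auto
  also have "\<dots> = a * (\<Sum>x\<in>?A. if \<tau> x = y then f x else 0) + b * (\<Sum>x\<in>?A. if \<tau> x = y then g x else 0)"
    by (simp add: sum_distrib_left sum.distrib[symmetric] if_distrib) (rule sum.cong, auto)
  also have "\<dots> = a * pushforward \<tau> f y + b * pushforward \<tau> g y"
  proof -
    have "pushforward \<tau> f y = (\<Sum>x\<in>?A. if \<tau> x = y then f x else 0)"
      "pushforward \<tau> g y = (\<Sum>x\<in>?A. if \<tau> x = y then g x else 0)"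
      by (rule pushforward_eq_sum[OF fA], blast)+
    then show ?thesis by simp
  qed
  finally show ?thesis .
qed

lemma pushforward_diff:
  assumes "finite {x. f x \<noteq> 0}" "finite {x. g x \<noteq> 0}"
  shows "pushforward \<tau> (\<lambda>x. f x - c * g x) y = pushforward \<tau> f y - c * pushforward \<tau> g y"
  using pushforward_lin[OF assms, where a = 1 and b = "- c" and \<tau> = \<tau> and y = y] by simp


lemma finite_support_tensor:
  assumes "finite {x. f x \<noteq> 0}" "finite {x. g x \<noteq> 0}"
  shows "finite {pq. (\<lambda>(p, q). f p * (g q :: 'k::field)) pq \<noteq> 0}"
proof -
  have "{pq. (\<lambda>(p, q). f p * g q) pq \<noteq> 0} \<subseteq> {x. f x \<noteq> 0} \<times> {x. g x \<noteq> 0}" by auto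
  then show ?thesis using assms by (simp add: finite_subset)
qed

abbreviation unit_mon :: monom where "unit_mon \<equiv> ((\<lambda>_. 0), (\<lambda>_. 0))"

lemma monom_eqI: "fst x = fst y \<Longrightarrow> snd x = snd y \<Longrightarrow> x = (y :: monom)"
  by (cases x, cases y) auto

lemma mem_monset_iff: "x \<in> monset n \<longleftrightarrow> (\<forall>i\<ge>n. fst x i = 0 \<and> snd x i = 0)"
  unfolding monset_def by (cases x) auto

lemma monset_eq_iff:
  assumes "x \<in> monset n" "y \<in> monset n"
  shows "x = y \<longleftrightarrow> (\<forall>j<n. fst x j = fst y j \<and> snd x j = snd y j)"
proof -
  have "x = y \<longleftrightarrow> (\<forall>j. fst x j = fst y j \<and> snd x j = snd y j)"
    by (cases x, cases y) (auto simp: fun_eq_iff)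
  also have "\<dots> \<longleftrightarrow> (\<forall>j<n. fst x j = fst y j \<and> snd x j = snd y j)"
    using assms unfolding mem_monset_iff by (metis not_le)
  finally show ?thesis .
qed

lemma unit_mon_monset [simp]: "unit_mon \<in> monset n"
  unfolding monset_def by auto

lemma mmul_monset: "p \<in> monset n \<Longrightarrow> q \<in> monset n \<Longrightarrow> mmul p q \<in> monset n"
  unfolding mem_monset_iff mmul_def by auto

lemma mmul_unit_left [simp]: "mmul unit_mon q = q"
  unfolding mmul_def by (cases q) auto

lemma mmul_unit_right [simp]: "mmul p unit_mon = p"
  unfolding mmul_def by (cases p) auto

lemma mmul_eq_unit_iff:
  "mmul p q = unit_mon \<longleftrightarrow> fst p = (\<lambda>_. 0) \<and> snd q = (\<lambda>_. 0) \<and> snd p = fst q"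
proof -
  have "mmul p q = unit_mon \<longleftrightarrow>
      (\<forall>j. fst p j + (fst q j - snd p j) = 0 \<and> snd q j + (snd p j - fst q j) = 0)"
    unfolding mmul_def by (auto simp: fun_eq_iff)
  also have "\<dots> \<longleftrightarrow> (\<forall>j. fst p j = 0 \<and> snd q j = 0 \<and> snd p j = fst q j)"
    by (intro all_cong1) arith
  finally show ?thesis by (auto simp: fun_eq_iff)
qed

definition mon_upd :: "monom \<Rightarrow> nat \<Rightarrow> nat \<Rightarrow> nat \<Rightarrow> monom" where
  "mon_upd x j s t = ((fst x)(j := s), (snd x)(j := t))"

lemma mon_upd_simps [simp]:
  "fst (mon_upd x j s t) j = s" "snd (mon_upd x j s t) j = t"
  "i \<noteq> j \<Longrightarrow> fst (mon_upd x j s t) i = fst x i" "i \<noteq> j \<Longrightarrow> snd (mon_upd x j s t) i = snd x i"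
  unfolding mon_upd_def by auto

lemma mon_upd_neq: "s \<noteq> fst x j \<or> t \<noteq> snd x j \<Longrightarrow> mon_upd x j s t \<noteq> x"
  unfolding mon_upd_def by (cases x) (auto simp: fun_eq_iff)

lemma mem_Sn_iff: "f \<in> Sn n \<longleftrightarrow> finite {x. f x \<noteq> 0} \<and> {x. f x \<noteq> 0} \<subseteq> monset n"
  unfolding Sn_def by auto

lemma SnD: "f \<in> Sn n \<Longrightarrow> finite {x. f x \<noteq> 0}" "f \<in> Sn n \<Longrightarrow> f x \<noteq> 0 \<Longrightarrow> x \<in> monset n"
  unfolding Sn_def by blast+

lemma Sn_lin_comb:
  assumes "f \<in> Sn n" "g \<in> Sn n"
  shows "(\<lambda>x. a * f x + b * g x :: 'k::field) \<in> Sn n"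
proof -
  have s: "{x. a * f x + b * g x \<noteq> 0} \<subseteq> {x. f x \<noteq> 0} \<union> {x. g x \<noteq> 0}" by auto
  show ?thesis unfolding mem_Sn_iff
    using finite_subset[OF s] SnD[OF assms(1)] SnD[OF assms(2)] s by auto
qed

lemma zero_Sn: "(\<lambda>_. 0 :: 'k::field) \<in> Sn n"
  unfolding mem_Sn_iff by simp

lemma Sone_Sn: "(Sone :: monom \<Rightarrow> 'k::field) \<in> Sn n"
  unfolding mem_Sn_iff Sone_def by auto

lemma emon_Sn: "m \<in> monset n \<Longrightarrow> (emon m :: monom \<Rightarrow> 'k::field) \<in> Sn n"
  unfolding mem_Sn_iff emon_def by auto

lemma finite_support_emon: "finite {x. (emon m :: monom \<Rightarrow> 'k::field) x \<noteq> 0}"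
  unfolding emon_def by simp

lemma pushforward_emon: "pushforward \<tau> (emon m) z = (if \<tau> m = z then 1 else (0::'k::field))"
  by (subst pushforward_single[where a = m]) (auto simp: emon_def)

lemma Sone_eq_emon: "Sone = emon unit_mon"
  unfolding Sone_def emon_def by auto

lemma Smult_eq_pushforward: "Smult f g = pushforward (case_prod mmul) (\<lambda>(p, q). f p * g q)"
  unfolding Smult_def pushforward_def by (rule ext, rule sum.cong) auto

lemma finite_support_Smult:
  assumes "finite {x. f x \<noteq> 0}" "finite {x. g x \<noteq> 0}"
  shows "finite {x. Smult f g x \<noteq> (0::'k::field)}"
  unfolding Smult_eq_pushforward by (rule finite_support_pushforward[OF finite_support_tensor[OF assms]])

lemma Smult_Sn:
  assumes f: "f \<in> Sn n" and g: "g \<in> Sn n"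
  shows "Smult f g \<in> Sn n"
proof -
  have "{x. Smult f g x \<noteq> 0} \<subseteq> case_prod mmul ` {pq. (\<lambda>(p, q). f p * g q) pq \<noteq> 0}"
    unfolding Smult_eq_pushforward by (rule support_pushforward)
  also have "\<dots> \<subseteq> monset n"
    using SnD(2)[OF f] SnD(2)[OF g] mmul_monset by fastforce
  finally show ?thesis
    unfolding mem_Sn_iff using finite_support_Smult SnD(1)[OF f] SnD(1)[OF g] by blast
qed

lemma Smult_zero_left [simp]: "Smult (\<lambda>_. 0) g = (\<lambda>_. 0 :: 'k::field)"
  unfolding Smult_def by simp

lemma Smult_zero_right [simp]: "Smult f (\<lambda>_. 0) = (\<lambda>_. 0 :: 'k::field)"
  unfolding Smult_def by simp

lemma Smult_emon_left:
  assumes ff: "finite {x. f x \<noteq> 0}"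
  shows "Smult (emon p) f = pushforward (mmul p) (f :: monom \<Rightarrow> 'k::field)"
proof
  fix x
  have "Smult (emon p) f x = (\<Sum>pq\<in>{p} \<times> {x. f x \<noteq> 0}.
      if case_prod mmul pq = x then (\<lambda>(p', q). emon p p' * f q) pq else 0)"
    unfolding Smult_eq_pushforward
    by (rule pushforward_eq_sum) (use ff in \<open>auto simp: emon_def split: if_splits\<close>)
  also have "\<dots> = pushforward (mmul p) f x"
  proof -
    have e: "{p} \<times> {x. f x \<noteq> 0} = Pair p ` {x. f x \<noteq> 0}" by auto
    show ?thesis unfolding e
      by (simp add: sum.reindex inj_on_def pushforward_eq_sum_support[OF ff])
        (rule sum.cong, auto simp: emon_def)
  qed
  finally show "Smult (emon p) f x = pushforward (mmul p) f x" .
qed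

lemma Smult_emon_right:
  assumes ff: "finite {x. f x \<noteq> 0}"
  shows "Smult f (emon q) = pushforward (\<lambda>p. mmul p q) (f :: monom \<Rightarrow> 'k::field)"
proof
  fix x
  have "Smult f (emon q) x = (\<Sum>pq\<in>{x. f x \<noteq> 0} \<times> {q}.
      if case_prod mmul pq = x then (\<lambda>(p, q'). f p * emon q q') pq else 0)"
    unfolding Smult_eq_pushforward
    by (rule pushforward_eq_sum) (use ff in \<open>auto simp: emon_def split: if_splits\<close>)
  also have "\<dots> = pushforward (\<lambda>p. mmul p q) f x"
  proof -
    have e: "{x. f x \<noteq> 0} \<times> {q} = (\<lambda>p. (p, q)) ` {x. f x \<noteq> 0}" by auto
    show ?thesis unfolding e
      by (simp add: sum.reindex inj_on_def pushforward_eq_sum_support[OF ff])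
        (rule sum.cong, auto simp: emon_def)
  qed
  finally show "Smult f (emon q) x = pushforward (\<lambda>p. mmul p q) f x" .
qed

lemma Smult_emon_sandwich:
  assumes f: "finite {x. f x \<noteq> 0}"
  shows "Smult (Smult (emon p) f) (emon q) = pushforward (\<lambda>x. mmul (mmul p x) q) (f :: monom \<Rightarrow> 'k::field)"
proof -
  have "Smult (Smult (emon p) f) (emon q) = pushforward (\<lambda>x. mmul x q) (pushforward (mmul p) f)"
    unfolding Smult_emon_left[OF f] by (rule Smult_emon_right[OF finite_support_pushforward[OF f]])
  also have "\<dots> = pushforward ((\<lambda>x. mmul x q) \<circ> mmul p) f"
    by (rule pushforward_comp[OF f])
  finally show ?thesis by (simp add: comp_def)
qed

lemma Smult_Sone_left: "finite {x. f x \<noteq> 0} \<Longrightarrow> Smult Sone f = (f :: monom \<Rightarrow> 'k::field)"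
proof -
  have "mmul unit_mon = (\<lambda>x. x)" by (rule ext) simp
  then show "finite {x. f x \<noteq> 0} \<Longrightarrow> Smult Sone f = f" by (simp add: Sone_eq_emon Smult_emon_left)
qed

lemma Smult_lin_comb_right:
  assumes ff: "finite {x. f x \<noteq> 0}" and fu: "finite {x. u x \<noteq> 0}" and fv: "finite {x. v x \<noteq> 0}"
  shows "Smult f (\<lambda>x. a * u x + b * v x) = (\<lambda>x. a * Smult f u x + b * Smult f v x :: 'k::field)"
proof
  fix y
  have e: "(\<lambda>(p, q). f p * (a * u q + b * v q))
      = (\<lambda>pq. a * (\<lambda>(p, q). f p * u q) pq + b * (\<lambda>(p, q). f p * v q) pq)"
    by (auto simp: algebra_simps)
  show "Smult f (\<lambda>x. a * u x + b * v x) y = a * Smult f u y + b * Smult f v y"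
    unfolding Smult_eq_pushforward e
    by (rule pushforward_lin[OF finite_support_tensor[OF ff fu] finite_support_tensor[OF ff fv]])
qed

lemma Smult_lin_comb_left:
  assumes fu: "finite {x. u x \<noteq> 0}" and fv: "finite {x. v x \<noteq> 0}" and ff: "finite {x. f x \<noteq> 0}"
  shows "Smult (\<lambda>x. a * u x + b * v x) f = (\<lambda>x. a * Smult u f x + b * Smult v f x :: 'k::field)"
proof
  fix y
  have e: "(\<lambda>(p, q). (a * u p + b * v p) * f q)
      = (\<lambda>pq. a * (\<lambda>(p, q). u p * f q) pq + b * (\<lambda>(p, q). v p * f q) pq)"
    by (auto simp: algebra_simps)
  show "Smult (\<lambda>x. a * u x + b * v x) f y = a * Smult u f y + b * Smult v f y"
    unfolding Smult_eq_pushforward e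
    by (rule pushforward_lin[OF finite_support_tensor[OF fu ff] finite_support_tensor[OF fv ff]])
qed


lemma is_ideal_Sn: "is_ideal n (Sn n :: (monom \<Rightarrow> 'k::field) set)"
  unfolding is_ideal_def
proof (intro conjI ballI)
  fix f g :: "monom \<Rightarrow> 'k" assume "f \<in> Sn n" "g \<in> Sn n"
  then show "(\<lambda>m. f m + g m) \<in> Sn n" using Sn_lin_comb[of f n g 1 1] by simp
next
  fix f :: "monom \<Rightarrow> 'k" assume "f \<in> Sn n"
  then show "(\<lambda>m. - f m) \<in> Sn n" using Sn_lin_comb[of f n f "-1" 0] by simp
next
  fix f r :: "monom \<Rightarrow> 'k" assume "f \<in> Sn n" "r \<in> Sn n"
  then show "Smult r f \<in> Sn n" "Smult f r \<in> Sn n" by (simp_all add: Smult_Sn)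
qed (simp_all add: zero_Sn)

lemma is_ideal_zero: "is_ideal n {(\<lambda>_. 0 :: 'k::field)}"
  unfolding is_ideal_def using zero_Sn by auto

lemma idealD:
  assumes "is_ideal n I"
  shows "I \<subseteq> Sn n" "(\<lambda>_. 0) \<in> I" "f \<in> I \<Longrightarrow> g \<in> I \<Longrightarrow> (\<lambda>m. f m + g m) \<in> I"
    "f \<in> I \<Longrightarrow> (\<lambda>m. - f m) \<in> I" "f \<in> I \<Longrightarrow> r \<in> Sn n \<Longrightarrow> Smult r f \<in> I"
    "f \<in> I \<Longrightarrow> r \<in> Sn n \<Longrightarrow> Smult f r \<in> I"
  using assms unfolding is_ideal_def by blast+

lemma ideal_smult:
  assumes I: "is_ideal n I" and h: "h \<in> I"
  shows "(\<lambda>x. c * h x :: 'k::field) \<in> I"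
proof -
  have hS: "h \<in> Sn n" using idealD(1)[OF I] h by blast
  have cS: "(\<lambda>x. c * Sone x + 0 * Sone x :: 'k) \<in> Sn n" by (rule Sn_lin_comb[OF Sone_Sn Sone_Sn])
  have "Smult (\<lambda>x. c * Sone x + 0 * Sone x) h = (\<lambda>x. c * Smult Sone h x + 0 * Smult Sone h x)"
    by (rule Smult_lin_comb_left) (use SnD(1)[OF Sone_Sn] SnD(1)[OF hS] in auto)
  also have "\<dots> = (\<lambda>x. c * h x)" using Smult_Sone_left[OF SnD(1)[OF hS]] by simp
  finally show ?thesis using idealD(5)[OF I h cS] by simp
qed

lemma ideal_lin_comb:
  assumes I: "is_ideal n I" and "f \<in> I" "g \<in> I"
  shows "(\<lambda>x. a * f x + b * g x :: 'k::field) \<in> I"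
  using idealD(3)[OF I ideal_smult[OF I assms(2)] ideal_smult[OF I assms(3)]] by simp

lemma ideal_sum:
  assumes I: "is_ideal n I" and M: "finite M" "M \<subseteq> I"
  shows "(\<lambda>x. \<Sum>g\<in>M. c g * g x :: 'k::field) \<in> I"
  using M
proof (induction M rule: finite_induct)
  case empty then show ?case using idealD(2)[OF I] by simp
next
  case (insert g M)
  then have "(\<lambda>x. 1 * (\<Sum>g\<in>M. c g * g x) + c g * g x) \<in> I"
    by (intro ideal_lin_comb[OF I]) auto
  then show ?case using insert by (simp add: add.commute)
qed

lemma ideal_sandwich_emon:
  assumes I: "is_ideal n I" and f: "f \<in> I" and p: "p \<in> monset n" and q: "q \<in> monset n"
  shows "pushforward (\<lambda>x. mmul (mmul p x) q) f \<in> (I :: (monom \<Rightarrow> 'k::field) set)"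
proof -
  have "f \<in> Sn n" using idealD(1)[OF I] f by blast
  moreover have "Smult (Smult (emon p) f) (emon q) \<in> I"
    by (rule idealD(6)[OF I idealD(5)[OF I f emon_Sn[OF p]] emon_Sn[OF q]])
  ultimately show ?thesis by (simp only: Smult_emon_sandwich[OF SnD(1)])
qed

lemma lin_span_subset_ideal:
  assumes I: "is_ideal n I" and G: "G \<subseteq> I"
  shows "lin_span G \<subseteq> I"
proof
  fix f assume "f \<in> lin_span G"
  then obtain M c where "finite M" "M \<subseteq> G" "f = (\<lambda>x. \<Sum>g\<in>M. c g * g x)"
    unfolding lin_span_def by blast
  then show "f \<in> I" using ideal_sum[OF I, of M c] G by auto
qed

lemma lin_span_base: "g \<in> G \<Longrightarrow> g \<in> lin_span (G :: (monom \<Rightarrow> 'k::field) set)"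
  unfolding lin_span_def by (rule CollectI, rule exI[of _ "{g}"], rule exI[of _ "\<lambda>_. 1"]) auto

lemma lin_span_zero: "(\<lambda>_. 0) \<in> lin_span (G :: (monom \<Rightarrow> 'k::field) set)"
  unfolding lin_span_def by (rule CollectI, rule exI[of _ "{}"]) auto

lemma lin_span_add_scaled:
  assumes "f \<in> lin_span G" "g \<in> lin_span G"
  shows "(\<lambda>x. f x + c * g x :: 'k::field) \<in> lin_span G"
proof -
  obtain M1 c1 where M1: "finite M1" "M1 \<subseteq> G" "f = (\<lambda>x. \<Sum>h\<in>M1. c1 h * h x)"
    using assms(1) unfolding lin_span_def by blast
  obtain M2 c2 where M2: "finite M2" "M2 \<subseteq> G" "g = (\<lambda>x. \<Sum>h\<in>M2. c2 h * h x)"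
    using assms(2) unfolding lin_span_def by blast
  define d where "d h = (if h \<in> M1 then c1 h else 0) + c * (if h \<in> M2 then c2 h else 0)" for h
  have fin: "finite (M1 \<union> M2)" using M1 M2 by simp
  have "(\<lambda>x. f x + c * g x) = (\<lambda>x. \<Sum>h\<in>M1 \<union> M2. d h * h x)"
  proof
    fix x
    have a: "(\<Sum>h\<in>M1 \<union> M2. (if h \<in> M1 then c1 h else 0) * h x) = (\<Sum>h\<in>M1. c1 h * h x)"
      by (rule sum.mono_neutral_cong_right) (use fin in auto)
    have b: "(\<Sum>h\<in>M1 \<union> M2. (if h \<in> M2 then c2 h else 0) * h x) = (\<Sum>h\<in>M2. c2 h * h x)"
      by (rule sum.mono_neutral_cong_right) (use fin in auto)
    have "(\<Sum>h\<in>M1 \<union> M2. d h * h x) = (\<Sum>h\<in>M1 \<union> M2. (if h \<in> M1 then c1 h else 0) * h x)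
        + c * (\<Sum>h\<in>M1 \<union> M2. (if h \<in> M2 then c2 h else 0) * h x)"
      unfolding d_def by (simp add: algebra_simps sum.distrib sum_distrib_left)
    then show "f x + c * g x = (\<Sum>h\<in>M1 \<union> M2. d h * h x)" using a b M1(3) M2(3) by simp
  qed
  then show ?thesis unfolding lin_span_def using fin M1(2) M2(2) by blast
qed

lemma is_ideal_Inter:
  assumes "\<LL> \<noteq> {}" and ideals: "\<forall>L\<in>\<LL>. is_ideal n L"
  shows "is_ideal n (\<Inter>\<LL> :: (monom \<Rightarrow> 'k::field) set)"
  unfolding is_ideal_def
proof (intro conjI ballI)
  show "\<Inter>\<LL> \<subseteq> Sn n" using idealD(1) ideals assms(1) by blast
  show "(\<lambda>_. 0) \<in> \<Inter>\<LL>" using idealD(2) ideals by blast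
  fix f assume f: "f \<in> \<Inter>\<LL>"
  show "(\<lambda>m. - f m) \<in> \<Inter>\<LL>"
    using idealD(4)[of n _ f] ideals f by blast
  show "(\<lambda>m. f m + g m) \<in> \<Inter>\<LL>" if "g \<in> \<Inter>\<LL>" for g
    using idealD(3)[of n _ f g] ideals f that by blast
  show "Smult r f \<in> \<Inter>\<LL>" "Smult f r \<in> \<Inter>\<LL>" if "r \<in> Sn n" for r :: "monom \<Rightarrow> 'k"
    using idealD(5,6)[of n _ f r] ideals f that by blast+
qed

lemma is_ideal_iprod:
  assumes "I \<subseteq> Sn n" "J \<subseteq> Sn n"
  shows "is_ideal n (iprod n I J :: (monom \<Rightarrow> 'k::field) set)"
proof -
  have "Sn n \<in> {L. is_ideal n L \<and> (\<forall>a\<in>I. \<forall>b\<in>J. Smult a b \<in> L)}"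
    using is_ideal_Sn Smult_Sn assms by blast
  then show ?thesis unfolding iprod_def by (intro is_ideal_Inter) auto
qed

lemma Smult_mem_iprod:
  "a \<in> I \<Longrightarrow> b \<in> J \<Longrightarrow> Smult a b \<in> iprod n I (J :: (monom \<Rightarrow> 'k::field) set)"
  unfolding iprod_def by blast

lemma iprod_subset_Int:
  assumes I: "is_ideal n I" and J: "is_ideal n J"
  shows "iprod n I J \<subseteq> I \<inter> (J :: (monom \<Rightarrow> 'k::field) set)"
proof -
  have "I \<in> {L. is_ideal n L \<and> (\<forall>a\<in>I. \<forall>b\<in>J. Smult a b \<in> L)}"
    using I idealD(6)[OF I] idealD(1)[OF J] by blast
  moreover have "J \<in> {L. is_ideal n L \<and> (\<forall>a\<in>I. \<forall>b\<in>J. Smult a b \<in> L)}"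
    using J idealD(5)[OF J] idealD(1)[OF I] by blast
  ultimately show ?thesis unfolding iprod_def by blast
qed


definition gen_coeff :: "nat \<Rightarrow> nat \<Rightarrow> nat \<Rightarrow> nat \<Rightarrow> 'k::field" where
  "gen_coeff a b s t = (if s = a \<and> t = b then 1 else 0) - (if s = Suc a \<and> t = Suc b then 1 else 0)"

lemma gen_coeff_eq_0_iff:
  "gen_coeff a b s t = (0::'k::field) \<longleftrightarrow> \<not> (s = a \<and> t = b) \<and> \<not> (s = Suc a \<and> t = Suc b)"
  unfolding gen_coeff_def by auto

lemma prod_indicator:
  "finite S \<Longrightarrow> (\<Prod>j\<in>S. if P j then 1 else 0) = (if \<forall>j\<in>S. P j then 1 else (0::'k::field))"
  by (induction S rule: finite_induct) auto

lemma sing_eq_iff: "sing j a b = sing j c d \<longleftrightarrow> a = c \<and> b = d"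
  unfolding sing_def by (auto simp: fun_eq_iff)

lemma sing_0_0: "sing j 0 0 = unit_mon"
  unfolding sing_def by auto

lemma sing_monset: "j < n \<Longrightarrow> sing j a b \<in> monset n"
  unfolding sing_def monset_def by auto

lemma mmul_sing:
  assumes "fst q j = 0" "snd q j = 0"
  shows "mmul (sing j k l) q = ((fst q)(j := k), (snd q)(j := l))"
  using assms unfolding mmul_def sing_def by (auto simp: fun_eq_iff)

lemma mono1_sing: "mono1 j a b (sing j s t) = (if s = a \<and> t = b then 1 else 0)"
  unfolding mono1_def emon_def by (simp add: sing_eq_iff)

lemma gen1_sing: "gen1 j a b (sing j s t) = gen_coeff a b s t"
  unfolding gen1_def emon_def gen_coeff_def by (simp add: sing_eq_iff)

lemma mono1_support: "mono1 j a b y \<noteq> (0::'k::field) \<Longrightarrow> \<exists>c d. y = sing j c d"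
  unfolding mono1_def emon_def by (auto split: if_splits)

lemma gen1_support: "gen1 j a b y \<noteq> (0::'k::field) \<Longrightarrow> \<exists>c d. y = sing j c d"
  unfolding gen1_def emon_def by (auto split: if_splits)

lemma gen1_Sn:
  assumes "j < n"
  shows "(gen1 j a b :: monom \<Rightarrow> 'k::field) \<in> Sn n"
proof -
  have "(\<lambda>x. 1 * emon (sing j a b) x + (-1) * emon (sing j (Suc a) (Suc b)) x :: 'k) \<in> Sn n"
    by (rule Sn_lin_comb[OF emon_Sn[OF sing_monset[OF assms]] emon_Sn[OF sing_monset[OF assms]]])
  then show ?thesis unfolding gen1_def by simp
qed

lemma prodlist_Cons: "prodlist (f # fs) = Smult f (prodlist fs)"
  unfolding prodlist_def by simp

lemma prodlist_Nil: "prodlist [] = Sone"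
  unfolding prodlist_def by simp

lemma prodlist_Sn: "set fs \<subseteq> Sn n \<Longrightarrow> prodlist fs \<in> (Sn n :: (monom \<Rightarrow> 'k::field) set)"
  by (induction fs) (auto simp: prodlist_Cons prodlist_Nil Sone_Sn Smult_Sn)

definition supported_in :: "nat set \<Rightarrow> monom \<Rightarrow> bool" where
  "supported_in J x \<longleftrightarrow> (\<forall>j. j \<notin> J \<longrightarrow> fst x j = 0 \<and> snd x j = 0)"

lemma prodlist_single_var_range:
  assumes "\<forall>j\<in>{lo..<lo+k}. \<forall>y. h j y \<noteq> 0 \<longrightarrow> (\<exists>a b. y = sing j a b)"
  shows "prodlist (map h [lo..<lo+k]) x = (if supported_in {lo..<lo+k} x
      then \<Prod>j\<in>{lo..<lo+k}. h j (sing j (fst x j) (snd x j)) else (0::'k::field))"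
  using assms
proof (induction k arbitrary: lo x)
  case 0
  have "supported_in {lo..<lo+0} x \<longleftrightarrow> x = unit_mon"
    unfolding supported_in_def by (cases x) (auto simp: fun_eq_iff)
  then show ?case by (simp add: prodlist_Nil Sone_def)
next
  case (Suc k)
  let ?R = "prodlist (map h [Suc lo..<Suc lo+k])"
  have IH: "\<And>y. ?R y = (if supported_in {Suc lo..<Suc lo+k} y
      then \<Prod>j\<in>{Suc lo..<Suc lo+k}. h j (sing j (fst y j) (snd y j)) else 0)"
    by (rule Suc.IH) (use Suc.prems in auto)
  define q0 where "q0 = ((fst x)(lo := 0), (snd x)(lo := 0))"
  define y0 where "y0 = (sing lo (fst x lo) (snd x lo), q0)"
  let ?F = "\<lambda>(p, q). h lo p * ?R q"
  have uniq: "\<forall>y. ?F y \<noteq> 0 \<longrightarrow> case_prod mmul y = x \<longrightarrow> y = y0"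
  proof (intro allI impI)
    fix y assume F: "?F y \<noteq> 0" and m: "case_prod mmul y = x"
    obtain p q where y: "y = (p, q)" by (cases y)
    have hp: "h lo p \<noteq> 0" and Rq: "?R q \<noteq> 0" using F y by auto
    obtain a b where p: "p = sing lo a b"
      using Suc.prems[rule_format, of lo p] hp by auto
    have "supported_in {Suc lo..<Suc lo+k} q" using Rq IH[of q] by (auto split: if_splits)
    then have q0: "fst q lo = 0" "snd q lo = 0" unfolding supported_in_def by auto
    have x: "x = ((fst q)(lo := a), (snd q)(lo := b))"
      using m y mmul_sing[OF q0] unfolding p by simp
    then have "fst x lo = a" "snd x lo = b" by auto
    moreover have "q = q0" unfolding q0_def using x q0 by (cases q) (auto simp: fun_eq_iff)
    ultimately show "y = y0" unfolding y0_def y p by simp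
  qed
  have my0: "case_prod mmul y0 = x"
    unfolding y0_def q0_def by (simp add: mmul_sing fun_eq_iff)
  have supp_iff: "supported_in {Suc lo..<Suc lo+k} q0 \<longleftrightarrow> supported_in {lo..<lo + Suc k} x"
    unfolding supported_in_def q0_def by auto
  have prod_eq: "(\<Prod>j\<in>{Suc lo..<Suc lo+k}. h j (sing j (fst q0 j) (snd q0 j)))
      = (\<Prod>j\<in>{Suc lo..<Suc lo+k}. h j (sing j (fst x j) (snd x j)))"
    by (rule prod.cong) (auto simp: q0_def)
  have "[lo..<lo + Suc k] = lo # [Suc lo..<Suc lo+k]" by (simp add: upt_conv_Cons)
  then have "prodlist (map h [lo..<lo + Suc k]) x = Smult (h lo) ?R x"
    by (simp add: prodlist_Cons)
  also have "\<dots> = ?F y0"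
    unfolding Smult_eq_pushforward using pushforward_single[OF uniq] my0 by simp
  also have "\<dots> = h lo (sing lo (fst x lo) (snd x lo)) * ?R q0"
    unfolding y0_def by simp
  also have "\<dots> = (if supported_in {lo..<lo + Suc k} x
      then \<Prod>j\<in>{lo..<lo+Suc k}. h j (sing j (fst x j) (snd x j)) else 0)"
    unfolding IH supp_iff prod_eq by (simp add: prod.atLeast_Suc_lessThan)
  finally show ?case .
qed

lemma prodlist_single_var:
  assumes "\<forall>j<n. \<forall>y. h j y \<noteq> 0 \<longrightarrow> (\<exists>a b. y = sing j a b)"
  shows "prodlist (map h [0..<n]) x =
     (if x \<in> monset n then \<Prod>j<n. h j (sing j (fst x j) (snd x j)) else (0::'k::field))"
proof -
  have "supported_in {0..<0 + n} x \<longleftrightarrow> x \<in> monset n"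
    unfolding supported_in_def mem_monset_iff by auto
  then show ?thesis
    using prodlist_single_var_range[of 0 n h x] assms by (simp add: atLeast0LessThan)
qed


section \<open>The ideal \<open>p\<^sub>i\<close> as the kernel of a localisation\<close>

text \<open>A monomial of \<open>(\<Otimes>\<^sub>j\<^sub>\<noteq>\<^sub>i S\<^sub>1(j)) \<otimes> K[x\<^sub>i, x\<^sub>i\<^sup>-\<^sup>1]\<close> is a monomial with vanishing \<open>i\<close>-th exponents
  together with the power of \<open>x\<^sub>i\<close>; \<open>x\<^sub>i\<^sup>k y\<^sub>i\<^sup>l\<close> is sent to \<open>x\<^sub>i\<^sup>k\<^sup>-\<^sup>l\<close>.\<close>

definition loc_mon :: "nat \<Rightarrow> monom \<Rightarrow> monom \<times> int" where
  "loc_mon i m = (((fst m)(i := 0), (snd m)(i := 0)), int (fst m i) - int (snd m i))"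

definition loc_mult :: "monom \<times> int \<Rightarrow> monom \<times> int \<Rightarrow> monom \<times> int" where
  "loc_mult u v = (mmul (fst u) (fst v), snd u + snd v)"

definition loc_kernel :: "nat \<Rightarrow> nat \<Rightarrow> (monom \<Rightarrow> 'k::field) set" where
  "loc_kernel n i = {f \<in> Sn n. \<forall>z. pushforward (loc_mon i) f z = 0}"

lemma loc_mon_mmul: "loc_mon i (mmul p q) = loc_mult (loc_mon i p) (loc_mon i q)"
  unfolding loc_mon_def loc_mult_def mmul_def by (auto simp: fun_eq_iff)

lemma pushforward_loc_mon_Smult:
  assumes ff: "finite {x. f x \<noteq> 0}" and fg: "finite {x. g x \<noteq> 0}"
  shows "pushforward (loc_mon i) (Smult f g) = pushforward (case_prod loc_mult)
    (\<lambda>(u, v). pushforward (loc_mon i) f u * pushforward (loc_mon i) g v :: 'k::field)"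
proof -
  let ?F = "\<lambda>(p, q). f p * g q"
  have e1: "loc_mon i \<circ> case_prod mmul = case_prod loc_mult \<circ> map_prod (loc_mon i) (loc_mon i)"
    by (auto simp: fun_eq_iff loc_mon_mmul)
  have e2: "pushforward (map_prod (loc_mon i) (loc_mon i)) ?F
      = (\<lambda>(u, v). pushforward (loc_mon i) f u * pushforward (loc_mon i) g v)"
    by (auto simp: fun_eq_iff pushforward_tensor[OF ff fg])
  have "pushforward (loc_mon i) (Smult f g) = pushforward (loc_mon i \<circ> case_prod mmul) ?F"
    unfolding Smult_eq_pushforward by (rule pushforward_comp[OF finite_support_tensor[OF ff fg]])
  also have "\<dots> = pushforward (case_prod loc_mult) (pushforward (map_prod (loc_mon i) (loc_mon i)) ?F)"
    unfolding e1 by (rule pushforward_comp[OF finite_support_tensor[OF ff fg], symmetric])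
  finally show ?thesis unfolding e2 .
qed

lemma loc_kernelD:
  "f \<in> loc_kernel n i \<Longrightarrow> f \<in> Sn n" "f \<in> loc_kernel n i \<Longrightarrow> pushforward (loc_mon i) f z = 0"
  unfolding loc_kernel_def by blast+

lemma loc_kernel_diff:
  assumes "f \<in> loc_kernel n i" "g \<in> loc_kernel n i"
  shows "(\<lambda>x. f x - c * g x) \<in> loc_kernel n i"
proof -
  have "(\<lambda>x. 1 * f x + (- c) * g x) \<in> Sn n"
    by (rule Sn_lin_comb[OF loc_kernelD(1)[OF assms(1)] loc_kernelD(1)[OF assms(2)]])
  moreover have "pushforward (loc_mon i) (\<lambda>x. f x - c * g x) z = 0" for z
    by (simp add: pushforward_diff[OF SnD(1)[OF loc_kernelD(1)[OF assms(1)]] SnD(1)[OF loc_kernelD(1)[OF assms(2)]]]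
        loc_kernelD(2)[OF assms(1)] loc_kernelD(2)[OF assms(2)])
  ultimately show ?thesis unfolding loc_kernel_def by simp
qed

lemma is_ideal_loc_kernel: "is_ideal n (loc_kernel n i :: (monom \<Rightarrow> 'k::field) set)"
  unfolding is_ideal_def
proof (intro conjI ballI)
  show "loc_kernel n i \<subseteq> Sn n" unfolding loc_kernel_def by auto
  show "(\<lambda>_. 0) \<in> (loc_kernel n i :: (monom \<Rightarrow> 'k) set)" unfolding loc_kernel_def using zero_Sn by auto
  fix f :: "monom \<Rightarrow> 'k" assume f: "f \<in> loc_kernel n i"
  show "(\<lambda>m. - f m) \<in> loc_kernel n i" using loc_kernel_diff[OF f f, of 2] by simp
  show "(\<lambda>m. f m + g m) \<in> loc_kernel n i" if "g \<in> loc_kernel n i" for g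
    using loc_kernel_diff[OF f that, of "-1"] by simp
  fix r :: "monom \<Rightarrow> 'k" assume r: "r \<in> Sn n"
  have ff: "finite {x. f x \<noteq> 0}" using SnD(1)[OF loc_kernelD(1)[OF f]] .
  have fr: "finite {x. r x \<noteq> 0}" using SnD(1)[OF r] .
  have pf: "pushforward (loc_mon i) f = (\<lambda>_. 0)" using loc_kernelD(2)[OF f] by auto
  show "Smult r f \<in> loc_kernel n i" unfolding loc_kernel_def
    using Smult_Sn[OF r loc_kernelD(1)[OF f]] pushforward_loc_mon_Smult[OF fr ff, of i] pf
    by (simp add: case_prod_beta')
  show "Smult f r \<in> loc_kernel n i" unfolding loc_kernel_def
    using Smult_Sn[OF loc_kernelD(1)[OF f] r] pushforward_loc_mon_Smult[OF ff fr, of i] pf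
    by (simp add: case_prod_beta')
qed

lemma emon_diff_mem_loc_kernel:
  assumes "m1 \<in> monset n" "m2 \<in> monset n" "loc_mon i m1 = loc_mon i m2"
  shows "(\<lambda>x. emon m1 x - emon m2 x :: 'k::field) \<in> loc_kernel n i"
proof -
  have "(\<lambda>x. 1 * emon m1 x + (-1) * emon m2 x :: 'k) \<in> Sn n"
    by (rule Sn_lin_comb[OF emon_Sn[OF assms(1)] emon_Sn[OF assms(2)]])
  moreover have "pushforward (loc_mon i) (\<lambda>x. emon m1 x - 1 * emon m2 x :: 'k) z = 0" for z
    by (simp only: pushforward_diff[OF finite_support_emon finite_support_emon] pushforward_emon assms(3)) simp
  ultimately show ?thesis unfolding loc_kernel_def by simp
qed

definition level :: "nat \<Rightarrow> monom \<Rightarrow> nat" where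
  "level i x = min (fst x i) (snd x i)"

lemma loc_mon_level_inj:
  assumes "loc_mon i x = loc_mon i y" "level i x = level i y"
  shows "x = y"
proof -
  have a: "(fst x)(i := 0) = (fst y)(i := 0)" "(snd x)(i := 0) = (snd y)(i := 0)"
    and d: "int (fst x i) - int (snd x i) = int (fst y i) - int (snd y i)"
    using assms(1) unfolding loc_mon_def by auto
  have i: "fst x i = fst y i \<and> snd x i = snd y i" using d assms(2) unfolding level_def by linarith
  have "fst x j = fst y j \<and> snd x j = snd y j" for j
    using i a[THEN fun_cong, of j] by (cases "j = i") auto
  then show ?thesis by (intro monom_eqI) (auto simp: fun_eq_iff)
qed

text \<open>A monomial of maximal level in its fibre cannot be cancelled in the pushforward.\<close>

lemma level_pos_if_max_in_fibre:
  assumes f: "f \<in> loc_kernel n i" and m: "f m \<noteq> 0"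
    and max: "\<forall>x. f x \<noteq> 0 \<longrightarrow> loc_mon i x = loc_mon i m \<longrightarrow> level i x \<le> level i m"
  shows "level i m > 0"
proof (rule ccontr)
  assume "\<not> level i m > 0"
  then have "\<forall>x. f x \<noteq> 0 \<longrightarrow> loc_mon i x = loc_mon i m \<longrightarrow> x = m"
    using max loc_mon_level_inj by (metis le_zero_eq not_gr_zero)
  then have "pushforward (loc_mon i) f (loc_mon i m) = f m"
    by (simp add: pushforward_single)
  with loc_kernelD(2)[OF f] m show False by simp
qed

declare split_paired_All [simp del] split_paired_Ex [simp del]

lemma descent:
  fixes L :: "'a \<Rightarrow> nat" and K W :: "('a \<Rightarrow> 'k::field) set"
  assumes K_finite: "\<And>f. f \<in> K \<Longrightarrow> finite {x. f x \<noteq> 0}"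
    and K_diff: "\<And>f g c. f \<in> K \<Longrightarrow> g \<in> K \<Longrightarrow> (\<lambda>x. f x - c * g x) \<in> K"
    and W_zero: "(\<lambda>_. 0) \<in> W"
    and W_add: "\<And>f g c. f \<in> W \<Longrightarrow> g \<in> W \<Longrightarrow> (\<lambda>x. f x + c * g x) \<in> W"
    and step: "\<And>f m. f \<in> K \<Longrightarrow> f m \<noteq> 0 \<Longrightarrow> (\<forall>x. f x \<noteq> 0 \<longrightarrow> L x \<le> L m) \<Longrightarrow>
       \<exists>g. g \<in> K \<and> g \<in> W \<and> g m \<noteq> 0 \<and> (\<forall>x. g x \<noteq> 0 \<longrightarrow> x \<noteq> m \<longrightarrow> L x < L m)"
  shows "K \<subseteq> W"
proof -
  have below: "f \<in> W" if "f \<in> K" "\<forall>x. f x \<noteq> 0 \<longrightarrow> L x < M" for f M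
    using that
  proof (induction M arbitrary: f)
    case 0
    then have "f = (\<lambda>_. 0)" by auto
    then show ?case using W_zero by simp
  next
    case (Suc M)
    have "f \<in> W" if "f \<in> K" "\<forall>x. f x \<noteq> 0 \<longrightarrow> L x \<le> M" "card {x. f x \<noteq> 0 \<and> L x = M} \<le> c" for f c
      using that
    proof (induction c arbitrary: f)
      case 0
      have "finite {x. f x \<noteq> 0 \<and> L x = M}"
        using K_finite[OF 0(1)] by (rule finite_subset[rotated]) auto
      then have "\<forall>x. f x \<noteq> 0 \<longrightarrow> L x < M" using 0 by (auto simp: le_less)
      then show ?case using Suc.IH 0(1) by blast
    next
      case (Suc c f)
      let ?S = "{x. f x \<noteq> 0 \<and> L x = M}"
      have fin: "finite ?S" using K_finite[OF Suc.prems(1)] by (rule finite_subset[rotated]) auto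
      show ?case
      proof (cases "?S = {}")
        case True
        then show ?thesis using Suc.IH[OF Suc.prems(1,2)] by (metis card.empty le0)
      next
        case False
        then obtain m where m: "f m \<noteq> 0" "L m = M" by blast
        obtain g where g: "g \<in> K" "g \<in> W" "g m \<noteq> 0" "\<forall>x. g x \<noteq> 0 \<longrightarrow> x \<noteq> m \<longrightarrow> L x < L m"
          using step[OF Suc.prems(1) m(1)] Suc.prems(2) m(2) by auto
        define f' where "f' = (\<lambda>x. f x - (f m / g m) * g x)"
        have f'K: "f' \<in> K" unfolding f'_def by (rule K_diff[OF Suc.prems(1) g(1)])
        have f'm: "f' m = 0" unfolding f'_def using g(3) by simp
        have le: "\<forall>x. f' x \<noteq> 0 \<longrightarrow> L x \<le> M"
          using Suc.prems(2) g(4) m(2) f'm unfolding f'_def by (metis diff_zero less_imp_le mult_zero_right)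
        have "{x. f' x \<noteq> 0 \<and> L x = M} \<subseteq> ?S - {m}"
          using g(4) m(2) f'm unfolding f'_def by auto
        then have "card {x. f' x \<noteq> 0 \<and> L x = M} \<le> card (?S - {m})"
          by (rule card_mono[OF finite_Diff[OF fin]])
        also have "\<dots> \<le> c" using Suc.prems(3) m fin by (simp add: card_Diff_singleton)
        finally have "f' \<in> W" using Suc.IH f'K le by blast
        then have "(\<lambda>x. f' x + (f m / g m) * g x) \<in> W" by (rule W_add[OF _ g(2)])
        then show ?thesis unfolding f'_def by simp
      qed
    qed
    then show ?case using Suc.prems by (auto simp: less_Suc_eq_le)
  qed
  show ?thesis
  proof
    fix f assume f: "f \<in> K"
    have "\<forall>x. f x \<noteq> 0 \<longrightarrow> L x < Suc (Max (L ` {x. f x \<noteq> 0}))"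
      using K_finite[OF f] by (auto simp: less_Suc_eq_le intro!: Max_ge)
    then show "f \<in> W" using below f by blast
  qed
qed


definition pp_gen :: "nat \<Rightarrow> nat \<Rightarrow> (nat \<Rightarrow> nat) \<Rightarrow> (nat \<Rightarrow> nat) \<Rightarrow> monom \<Rightarrow> 'k::field" where
  "pp_gen n i a b =
    prodlist (map (\<lambda>j. if j = i then gen1 j (a j) (b j) else mono1 j (a j) (b j)) [0..<n])"

lemma pp_eq_lin_span: "pp n i = lin_span {pp_gen n i a b | a b. True}"
  unfolding pp_def pp_gen_def ..

definition mon_trunc :: "nat \<Rightarrow> (nat \<Rightarrow> nat) \<Rightarrow> (nat \<Rightarrow> nat) \<Rightarrow> monom" where
  "mon_trunc n a b = ((\<lambda>j. if j < n then a j else 0), (\<lambda>j. if j < n then b j else 0))"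

lemma mon_trunc_monset: "mon_trunc n a b \<in> monset n"
  unfolding mon_trunc_def monset_def by auto

lemma mon_upd_monset: "x \<in> monset n \<Longrightarrow> i < n \<Longrightarrow> mon_upd x i s t \<in> monset n"
  unfolding mem_monset_iff mon_upd_def by auto

lemma pp_gen_eq:
  fixes a b :: "nat \<Rightarrow> nat"
  assumes i: "i < n"
  defines "m \<equiv> mon_trunc n a b"
  shows "pp_gen n i a b = (\<lambda>x. emon m x - emon (mon_upd m i (Suc (a i)) (Suc (b i))) x :: 'k::field)"
proof
  fix x
  let ?m' = "mon_upd m i (Suc (a i)) (Suc (b i))"
  let ?h = "\<lambda>j. if j = i then gen1 j (a j) (b j) else mono1 j (a j) (b j) :: monom \<Rightarrow> 'k"
  have m: "m \<in> monset n" "?m' \<in> monset n"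
    unfolding m_def by (simp_all add: mon_trunc_monset mon_upd_monset i)
  have supp: "\<forall>j<n. \<forall>y. ?h j y \<noteq> 0 \<longrightarrow> (\<exists>c d. y = sing j c d)"
  proof (intro allI impI)
    fix j y assume "j < n" "?h j y \<noteq> 0"
    then show "\<exists>c d. y = sing j c d"
      using gen1_support[of j "a j" "b j" y] mono1_support[of j "a j" "b j" y] by (cases "j = i") auto
  qed
  show "pp_gen n i a b x = (emon m x - emon ?m' x :: 'k)"
  proof (cases "x \<in> monset n")
    case False
    then have "x \<noteq> m" "x \<noteq> ?m'" using m by auto
    moreover have "pp_gen n i a b x = (0::'k)"
      unfolding pp_gen_def using prodlist_single_var[OF supp, of x] False by simp
    ultimately show ?thesis by (simp add: emon_def)
  next
    case True
    let ?P = "\<forall>j\<in>{..<n}-{i}. fst x j = a j \<and> snd x j = b j"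
    have "(\<Prod>j<n. ?h j (sing j (fst x j) (snd x j)))
        = ?h i (sing i (fst x i) (snd x i)) * (\<Prod>j\<in>{..<n}-{i}. ?h j (sing j (fst x j) (snd x j)))"
      by (rule prod.remove) (use i in auto)
    also have "(\<Prod>j\<in>{..<n}-{i}. ?h j (sing j (fst x j) (snd x j)))
        = (\<Prod>j\<in>{..<n}-{i}. if fst x j = a j \<and> snd x j = b j then 1 else 0)"
      by (rule prod.cong) (auto simp: mono1_sing)
    also have "\<dots> = (if ?P then 1 else 0)" by (rule prod_indicator) simp
    finally have prod: "(\<Prod>j<n. ?h j (sing j (fst x j) (snd x j)))
        = gen_coeff (a i) (b i) (fst x i) (snd x i) * (if ?P then 1 else 0)"
      by (simp add: gen1_sing)
    have "x = m \<longleftrightarrow> ?P \<and> fst x i = a i \<and> snd x i = b i"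
      unfolding monset_eq_iff[OF True m(1)] using i by (auto simp: m_def mon_trunc_def)
    moreover have "x = ?m' \<longleftrightarrow> ?P \<and> fst x i = Suc (a i) \<and> snd x i = Suc (b i)"
      unfolding monset_eq_iff[OF True m(2)] using i
      by (auto simp: m_def mon_trunc_def mon_upd_def)
    ultimately show ?thesis using True prod unfolding pp_gen_def
      by (simp add: prodlist_single_var[OF supp] emon_def gen_coeff_def)
  qed
qed

lemma pp_gen_mem_loc_kernel:
  assumes "i < n"
  shows "pp_gen n i a b \<in> (loc_kernel n i :: (monom \<Rightarrow> 'k::field) set)"
proof -
  have "loc_mon i (mon_upd (mon_trunc n a b) i (Suc (a i)) (Suc (b i))) = loc_mon i (mon_trunc n a b)"
    using assms unfolding loc_mon_def mon_upd_def mon_trunc_def by (auto simp: fun_eq_iff)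
  then show ?thesis unfolding pp_gen_eq[OF assms]
    by (intro emon_diff_mem_loc_kernel mon_trunc_monset mon_upd_monset assms) simp
qed

lemma pp_subset_loc_kernel: "i < n \<Longrightarrow> pp n i \<subseteq> (loc_kernel n i :: (monom \<Rightarrow> 'k::field) set)"
  unfolding pp_eq_lin_span
  by (rule lin_span_subset_ideal[OF is_ideal_loc_kernel]) (use pp_gen_mem_loc_kernel in blast)

text \<open>Descent on the level: a coefficient at \<open>x\<^sup>\<alpha> y\<^sup>\<beta>\<close> of maximal level is cancelled by the
  generator \<open>x\<^sup>\<alpha>\<^sup>-\<^sup>e\<^sub>i y\<^sup>\<beta>\<^sup>-\<^sup>e\<^sub>i - x\<^sup>\<alpha> y\<^sup>\<beta>\<close> of \<open>p\<^sub>i\<close>.\<close>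

lemma loc_kernel_subset_pp:
  assumes i: "i < n"
  shows "(loc_kernel n i :: (monom \<Rightarrow> 'k::field) set) \<subseteq> pp n i"
proof (rule descent[where L = "level i"])
  show "\<And>f. f \<in> (loc_kernel n i :: (monom \<Rightarrow> 'k) set) \<Longrightarrow> finite {x. f x \<noteq> 0}"
    using loc_kernelD(1) SnD(1) by blast
  show "\<And>f g c. f \<in> (loc_kernel n i :: (monom \<Rightarrow> 'k) set) \<Longrightarrow> g \<in> loc_kernel n i \<Longrightarrow>
      (\<lambda>x. f x - c * g x) \<in> loc_kernel n i"
    by (rule loc_kernel_diff)
  show "(\<lambda>_. 0) \<in> (pp n i :: (monom \<Rightarrow> 'k) set)"
    unfolding pp_def by (rule lin_span_zero)
  show "\<And>f g c. f \<in> (pp n i :: (monom \<Rightarrow> 'k) set) \<Longrightarrow> g \<in> pp n i \<Longrightarrow> (\<lambda>x. f x + c * g x) \<in> pp n i"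
    unfolding pp_def by (rule lin_span_add_scaled)
  fix f :: "monom \<Rightarrow> 'k" and m
  assume f: "f \<in> loc_kernel n i" and m: "f m \<noteq> 0" and max: "\<forall>x. f x \<noteq> 0 \<longrightarrow> level i x \<le> level i m"
  have pos: "level i m > 0" using level_pos_if_max_in_fibre[OF f m] max by blast
  have mm: "m \<in> monset n" using SnD(2)[OF loc_kernelD(1)[OF f] m] .
  define a where "a = (fst m)(i := fst m i - 1)"
  define b where "b = (snd m)(i := snd m i - 1)"
  let ?g = "pp_gen n i a b :: monom \<Rightarrow> 'k"
  have top: "mon_upd (mon_trunc n a b) i (Suc (a i)) (Suc (b i)) = m"
    using mm pos unfolding mon_upd_def mon_trunc_def a_def b_def level_def mem_monset_iff
    by (cases m) (auto simp: fun_eq_iff)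
  have bottom: "mon_trunc n a b \<noteq> m"
  proof
    assume "mon_trunc n a b = m"
    then have "fst (mon_trunc n a b) i = fst m i" by simp
    then show False using pos i unfolding mon_trunc_def a_def level_def by simp
  qed
  have lower: "level i (mon_trunc n a b) < level i m"
    using pos i unfolding mon_trunc_def a_def b_def level_def by auto
  have "?g \<in> loc_kernel n i" by (rule pp_gen_mem_loc_kernel[OF i])
  moreover have "?g \<in> pp n i" unfolding pp_eq_lin_span by (rule lin_span_base) blast
  moreover have "?g m \<noteq> 0"
    unfolding pp_gen_eq[OF i] using bottom top by (simp add: emon_def)
  moreover have "\<forall>x. ?g x \<noteq> 0 \<longrightarrow> x \<noteq> m \<longrightarrow> level i x < level i m"
    unfolding pp_gen_eq[OF i] using top lower by (auto simp: emon_def split: if_splits)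
  ultimately show "\<exists>g :: monom \<Rightarrow> 'k. g \<in> loc_kernel n i \<and> g \<in> pp n i \<and> g m \<noteq> 0 \<and>
      (\<forall>x. g x \<noteq> 0 \<longrightarrow> x \<noteq> m \<longrightarrow> level i x < level i m)"
    by blast
qed

lemma pp_eq_loc_kernel: "i < n \<Longrightarrow> pp n i = (loc_kernel n i :: (monom \<Rightarrow> 'k::field) set)"
  using pp_subset_loc_kernel loc_kernel_subset_pp by blast


section \<open>The idempotents \<open>1 - x\<^sub>j y\<^sub>j\<close>\<close>

definition idem :: "nat \<Rightarrow> monom \<Rightarrow> 'k::field" where
  "idem j = gen1 j 0 0"

lemma idem_eq: "idem j = (\<lambda>x. 1 * emon unit_mon x + (-1) * emon (sing j 1 1) x)"
  unfolding idem_def gen1_def by (auto simp: sing_0_0)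

lemma idem_Sn: "j < n \<Longrightarrow> (idem j :: monom \<Rightarrow> 'k::field) \<in> Sn n"
  unfolding idem_def by (rule gen1_Sn)

lemma finite_support_idem: "finite {x. (idem j :: monom \<Rightarrow> 'k::field) x \<noteq> 0}"
  using SnD(1)[OF idem_Sn[OF lessI]] .

lemma idem_neq_0: "(idem i :: monom \<Rightarrow> 'k::field) \<noteq> (\<lambda>_. 0)"
proof
  assume "(idem i :: monom \<Rightarrow> 'k) = (\<lambda>_. 0)"
  then have "(idem i unit_mon :: 'k) = 0" by simp
  moreover have "sing i 1 1 \<noteq> unit_mon" unfolding sing_def by (auto simp: fun_eq_iff)
  ultimately show False unfolding idem_eq emon_def by simp
qed

lemma idem_mem_loc_kernel: "i < n \<Longrightarrow> (idem i :: monom \<Rightarrow> 'k::field) \<in> loc_kernel n i"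
proof -
  assume i: "i < n"
  have "loc_mon i unit_mon = loc_mon i (sing i 1 1)" unfolding loc_mon_def sing_def by auto
  then have "(\<lambda>x. emon unit_mon x - emon (sing i 1 1) x :: 'k) \<in> loc_kernel n i"
    by (rule emon_diff_mem_loc_kernel[OF unit_mon_monset sing_monset[OF i]])
  then show ?thesis unfolding idem_eq by simp
qed

lemma idem_not_mem_loc_kernel: "i \<noteq> j \<Longrightarrow> (idem i :: monom \<Rightarrow> 'k::field) \<notin> loc_kernel n j"
proof
  assume ij: "i \<noteq> j" and idem: "(idem i :: monom \<Rightarrow> 'k) \<in> loc_kernel n j"
  have e: "idem i = (\<lambda>x. emon unit_mon x - 1 * emon (sing i 1 1) x :: 'k)" unfolding idem_eq by simp
  have "loc_mon j (sing i 1 1) \<noteq> loc_mon j unit_mon"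
  proof
    assume "loc_mon j (sing i 1 1) = loc_mon j unit_mon"
    then have "((fst (sing i 1 1))(j := 0)) i = ((fst unit_mon)(j := 0)) i" unfolding loc_mon_def by simp
    then show False using ij unfolding sing_def by simp
  qed
  then have "pushforward (loc_mon j) (idem i :: monom \<Rightarrow> 'k) (loc_mon j unit_mon) = 1"
    unfolding e pushforward_diff[OF finite_support_emon finite_support_emon] pushforward_emon by simp
  then show False using loc_kernelD(2)[OF idem] by simp
qed

lemma mmul_sing_1_1_right:
  "mmul p (sing j 1 1) = ((fst p)(j := fst p j + (1 - snd p j)), (snd p)(j := 1 + (snd p j - 1)))"
  unfolding mmul_def sing_def by (auto simp: fun_eq_iff)

lemma mmul_sing_1_1_left:
  "mmul (sing j 1 1) q = ((fst q)(j := 1 + (fst q j - 1)), (snd q)(j := snd q j + (1 - fst q j)))"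
  unfolding mmul_def sing_def by (auto simp: fun_eq_iff)

lemma preimage_mmul_sing_1_1_right:
  "{p. mmul p (sing j 1 1) = x} = (if snd x j = 0 then {}
     else if snd x j = 1 \<and> fst x j \<ge> 1 then {x, mon_upd x j (fst x j - 1) 0} else {x})"
  (is "?A = ?B")
proof (rule set_eqI)
  fix p
  have "p \<in> ?A \<longleftrightarrow> fst x = (fst p)(j := fst p j + (1 - snd p j)) \<and> snd x = (snd p)(j := 1 + (snd p j - 1))"
    unfolding mmul_sing_1_1_right by (cases x) auto
  also have "\<dots> \<longleftrightarrow> p \<in> ?B"
  proof
    assume "fst x = (fst p)(j := fst p j + (1 - snd p j)) \<and> snd x = (snd p)(j := 1 + (snd p j - 1))"
    then have other: "\<And>i. i \<noteq> j \<Longrightarrow> fst x i = fst p i \<and> snd x i = snd p i"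
      and xj: "fst x j = fst p j + (1 - snd p j)" "snd x j = 1 + (snd p j - 1)" by auto
    show "p \<in> ?B"
    proof (cases "snd p j = 0")
      case True
      have "p = mon_upd x j (fst x j - 1) 0"
        by (rule monom_eqI) (use other xj True in \<open>auto simp: fun_eq_iff mon_upd_def\<close>)
      moreover have "snd x j = 1" "fst x j \<ge> 1" using xj True by auto
      ultimately show ?thesis by simp
    next
      case False
      have "fst p i = fst x i \<and> snd p i = snd x i" for i
        using other[of i] xj False by (cases "i = j") auto
      then have "p = x" by (intro monom_eqI) (auto simp: fun_eq_iff)
      moreover have "snd x j \<noteq> 0" using xj by simp
      ultimately show ?thesis by auto
    qed
  next
    assume "p \<in> ?B"
    then show "fst x = (fst p)(j := fst p j + (1 - snd p j)) \<and> snd x = (snd p)(j := 1 + (snd p j - 1))"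
      by (auto simp: mon_upd_def fun_eq_iff split: if_splits)
  qed
  finally show "p \<in> ?A \<longleftrightarrow> p \<in> ?B" .
qed

lemma preimage_mmul_sing_1_1_left:
  "{q. mmul (sing j 1 1) q = x} = (if fst x j = 0 then {}
     else if fst x j = 1 \<and> snd x j \<ge> 1 then {x, mon_upd x j 0 (snd x j - 1)} else {x})"
  (is "?A = ?B")
proof (rule set_eqI)
  fix p
  have "p \<in> ?A \<longleftrightarrow> fst x = (fst p)(j := 1 + (fst p j - 1)) \<and> snd x = (snd p)(j := snd p j + (1 - fst p j))"
    unfolding mmul_sing_1_1_left by (cases x) auto
  also have "\<dots> \<longleftrightarrow> p \<in> ?B"
  proof
    assume "fst x = (fst p)(j := 1 + (fst p j - 1)) \<and> snd x = (snd p)(j := snd p j + (1 - fst p j))"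
    then have other: "\<And>i. i \<noteq> j \<Longrightarrow> fst x i = fst p i \<and> snd x i = snd p i"
      and xj: "fst x j = 1 + (fst p j - 1)" "snd x j = snd p j + (1 - fst p j)" by auto
    show "p \<in> ?B"
    proof (cases "fst p j = 0")
      case True
      have "p = mon_upd x j 0 (snd x j - 1)"
        by (rule monom_eqI) (use other xj True in \<open>auto simp: fun_eq_iff mon_upd_def\<close>)
      moreover have "fst x j = 1" "snd x j \<ge> 1" using xj True by auto
      ultimately show ?thesis by simp
    next
      case False
      have "fst p i = fst x i \<and> snd p i = snd x i" for i
        using other[of i] xj False by (cases "i = j") auto
      then have "p = x" by (intro monom_eqI) (auto simp: fun_eq_iff)
      moreover have "fst x j \<noteq> 0" using xj by simp
      ultimately show ?thesis by auto
    qed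
  next
    assume "p \<in> ?B"
    then show "fst x = (fst p)(j := 1 + (fst p j - 1)) \<and> snd x = (snd p)(j := snd p j + (1 - fst p j))"
      by (auto simp: mon_upd_def fun_eq_iff split: if_splits)
  qed
  finally show "p \<in> ?A \<longleftrightarrow> p \<in> ?B" .
qed

lemma Smult_idem_right:
  assumes g: "finite {x. g x \<noteq> 0}"
  shows "Smult g (idem j) x = (if snd x j = 0 then g x
    else if snd x j = 1 \<and> fst x j \<ge> 1 then - g (mon_upd x j (fst x j - 1) 0) else (0::'k::field))"
proof -
  have "Smult g (idem j) = (\<lambda>x. 1 * Smult g (emon unit_mon) x + (-1) * Smult g (emon (sing j 1 1)) x)"
    unfolding idem_eq by (rule Smult_lin_comb_right[OF g finite_support_emon finite_support_emon])
  moreover have "Smult g (emon unit_mon) = g"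
  proof -
    have "(\<lambda>p. mmul p unit_mon) = (\<lambda>p. p)" by (rule ext) simp
    then show ?thesis using Smult_emon_right[OF g, of unit_mon] by simp
  qed
  moreover have "Smult g (emon (sing j 1 1)) x = sum g {p. mmul p (sing j 1 1) = x}"
    unfolding Smult_emon_right[OF g]
    by (rule pushforward_finite_fibre) (subst preimage_mmul_sing_1_1_right, simp)
  ultimately have "Smult g (idem j) x = g x - sum g {p. mmul p (sing j 1 1) = x}" by simp
  then show ?thesis
    unfolding preimage_mmul_sing_1_1_right using mon_upd_neq[of "fst x j - 1" x j 0] by auto
qed

lemma Smult_idem_left:
  assumes g: "finite {x. g x \<noteq> 0}"
  shows "Smult (idem j) g x = (if fst x j = 0 then g x
    else if fst x j = 1 \<and> snd x j \<ge> 1 then - g (mon_upd x j 0 (snd x j - 1)) else (0::'k::field))"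
proof -
  have "Smult (idem j) g = (\<lambda>x. 1 * Smult (emon unit_mon) g x + (-1) * Smult (emon (sing j 1 1)) g x)"
    unfolding idem_eq by (rule Smult_lin_comb_left[OF finite_support_emon finite_support_emon g])
  moreover have "Smult (emon unit_mon) g = g" using Smult_Sone_left[OF g] by (simp add: Sone_eq_emon)
  moreover have "Smult (emon (sing j 1 1)) g x = sum g {q. mmul (sing j 1 1) q = x}"
    unfolding Smult_emon_left[OF g]
    by (rule pushforward_finite_fibre) (subst preimage_mmul_sing_1_1_left, simp)
  ultimately have "Smult (idem j) g x = g x - sum g {q. mmul (sing j 1 1) q = x}" by simp
  then show ?thesis
    unfolding preimage_mmul_sing_1_1_left using mon_upd_neq[of 0 x j "snd x j - 1"] by auto
qed

lemma Smult_idem_sandwich: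
  assumes h: "finite {x. h x \<noteq> 0}"
  shows "Smult (idem j) (Smult h (idem j)) x = (if fst x j = 0 \<and> snd x j = 0 then h x
     else if fst x j = 1 \<and> snd x j = 1 then - h (mon_upd x j 0 0) else (0::'k::field))"
  by (simp add: Smult_idem_left[OF finite_support_Smult[OF h finite_support_idem]] Smult_idem_right[OF h])


fun mult_idems_right :: "nat list \<Rightarrow> (monom \<Rightarrow> 'k::field) \<Rightarrow> monom \<Rightarrow> 'k" where
  "mult_idems_right [] g = g"
| "mult_idems_right (j # js) g = Smult (mult_idems_right js g) (idem j)"

fun mult_idems_left :: "nat list \<Rightarrow> (monom \<Rightarrow> 'k::field) \<Rightarrow> monom \<Rightarrow> 'k" where
  "mult_idems_left [] g = g"
| "mult_idems_left (j # js) g = Smult (idem j) (mult_idems_left js g)"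

fun sandwich_idems :: "nat list \<Rightarrow> (monom \<Rightarrow> 'k::field) \<Rightarrow> monom \<Rightarrow> 'k" where
  "sandwich_idems [] g = g"
| "sandwich_idems (j # js) g = Smult (idem j) (Smult (sandwich_idems js g) (idem j))"

lemma mult_idems_right_mem_ideal:
  "is_ideal n I \<Longrightarrow> g \<in> I \<Longrightarrow> set js \<subseteq> {..<n} \<Longrightarrow> mult_idems_right js g \<in> (I :: (monom \<Rightarrow> 'k::field) set)"
  by (induction js) (auto intro: idealD(6) idem_Sn)

lemma mult_idems_left_mem_ideal:
  "is_ideal n I \<Longrightarrow> g \<in> I \<Longrightarrow> set js \<subseteq> {..<n} \<Longrightarrow> mult_idems_left js g \<in> (I :: (monom \<Rightarrow> 'k::field) set)"
  by (induction js) (auto intro: idealD(5) idem_Sn)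

lemma sandwich_idems_mem_ideal:
  assumes I: "is_ideal n I"
  shows "g \<in> I \<Longrightarrow> set js \<subseteq> {..<n} \<Longrightarrow> sandwich_idems js g \<in> (I :: (monom \<Rightarrow> 'k::field) set)"
proof (induction js)
  case (Cons j js)
  then have "sandwich_idems js g \<in> I" "j < n" by auto
  then show ?case using idealD(5)[OF I idealD(6)[OF I _ idem_Sn] idem_Sn] by simp
qed simp

lemma finite_support_mult_idems_right:
  "finite {x. g x \<noteq> 0} \<Longrightarrow> finite {x. mult_idems_right js g x \<noteq> (0::'k::field)}"
  by (induction js) (auto intro: finite_support_Smult finite_support_idem)

lemma finite_support_mult_idems_left:
  "finite {x. g x \<noteq> 0} \<Longrightarrow> finite {x. mult_idems_left js g x \<noteq> (0::'k::field)}"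
  by (induction js) (auto intro: finite_support_Smult finite_support_idem)

lemma finite_support_sandwich_idems:
  "finite {x. g x \<noteq> 0} \<Longrightarrow> finite {x. sandwich_idems js g x \<noteq> (0::'k::field)}"
  by (induction js) (auto intro!: finite_support_Smult finite_support_idem)

lemma mult_idems_right_eq:
  assumes g: "finite {x. g x \<noteq> 0}" and x: "\<forall>j\<in>set js. fst x j = 0 \<and> snd x j = 0"
  shows "mult_idems_right js g x = (g x :: 'k::field)"
  using x by (induction js) (auto simp: Smult_idem_right[OF finite_support_mult_idems_right[OF g]])

lemma mult_idems_left_eq:
  assumes g: "finite {x. g x \<noteq> 0}" and x: "\<forall>j\<in>set js. fst x j = 0 \<and> snd x j = 0"
  shows "mult_idems_left js g x = (g x :: 'k::field)"
  using x by (induction js) (auto simp: Smult_idem_left[OF finite_support_mult_idems_left[OF g]])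

lemma mult_idems_right_eq_0:
  assumes g: "finite {x. g x \<noteq> 0}" and "j \<in> set js" "fst x j = 0" "snd x j \<noteq> 0"
  shows "mult_idems_right js g x = (0 :: 'k::field)"
  using assms(2-)
proof (induction js arbitrary: x)
  case (Cons i js)
  show ?case
  proof (cases "j = i")
    case True
    then show ?thesis using Cons.prems by (simp add: Smult_idem_right[OF finite_support_mult_idems_right[OF g]])
  next
    case False
    then have "mult_idems_right js g x = 0" "\<And>s. mult_idems_right js g (mon_upd x i s 0) = 0"
      using Cons by auto
    then show ?thesis by (simp add: Smult_idem_right[OF finite_support_mult_idems_right[OF g]])
  qed
qed simp

lemma mult_idems_left_eq_0:
  assumes g: "finite {x. g x \<noteq> 0}" and "j \<in> set js" "snd x j = 0" "fst x j \<noteq> 0"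
  shows "mult_idems_left js g x = (0 :: 'k::field)"
  using assms(2-)
proof (induction js arbitrary: x)
  case (Cons i js)
  show ?case
  proof (cases "j = i")
    case True
    then show ?thesis using Cons.prems by (simp add: Smult_idem_left[OF finite_support_mult_idems_left[OF g]])
  next
    case False
    then have "mult_idems_left js g x = 0" "\<And>s. mult_idems_left js g (mon_upd x i 0 s) = 0"
      using Cons by auto
    then show ?thesis by (simp add: Smult_idem_left[OF finite_support_mult_idems_left[OF g]])
  qed
qed simp

definition mon_erase :: "nat set \<Rightarrow> monom \<Rightarrow> monom" where
  "mon_erase J x = ((\<lambda>i. if i \<in> J then 0 else fst x i), (\<lambda>i. if i \<in> J then 0 else snd x i))"

lemma gen_coeff_0_0:
  "gen_coeff 0 0 s t = (if s = 0 \<and> t = 0 then 1 else if s = 1 \<and> t = 1 then -1 else (0::'k::field))"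
  unfolding gen_coeff_def by auto

lemma sandwich_idems_eq:
  assumes g: "finite {x. g x \<noteq> 0}" and "distinct js"
  shows "sandwich_idems js g x
    = (\<Prod>j\<in>set js. gen_coeff 0 0 (fst x j) (snd x j)) * (g (mon_erase (set js) x) :: 'k::field)"
  using assms(2)
proof (induction js arbitrary: x)
  case Nil
  have "mon_erase {} x = x" unfolding mon_erase_def by simp
  then show ?case by simp
next
  case (Cons j js)
  have j: "j \<notin> set js" and d: "distinct js" using Cons.prems by auto
  let ?c = "\<lambda>x. \<Prod>i\<in>set js. gen_coeff 0 0 (fst x i) (snd x i) :: 'k"
  have sw: "sandwich_idems (j # js) g x = (if fst x j = 0 \<and> snd x j = 0 then sandwich_idems js g x
     else if fst x j = 1 \<and> snd x j = 1 then - sandwich_idems js g (mon_upd x j 0 0) else 0)"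
    by (simp add: Smult_idem_sandwich[OF finite_support_sandwich_idems[OF g]])
  have prod: "(\<Prod>i\<in>set (j # js). gen_coeff 0 0 (fst x i) (snd x i)) = gen_coeff 0 0 (fst x j) (snd x j) * ?c x"
    using j by simp
  have c_upd: "?c (mon_upd x j 0 0) = ?c x"
  proof (rule prod.cong[OF refl])
    fix i assume "i \<in> set js"
    then have "i \<noteq> j" using j by auto
    then show "gen_coeff 0 0 (fst (mon_upd x j 0 0) i) (snd (mon_upd x j 0 0) i)
      = (gen_coeff 0 0 (fst x i) (snd x i) :: 'k)" by simp
  qed
  have erase_upd: "mon_erase (set js) (mon_upd x j 0 0) = mon_erase (set (j # js)) x"
    unfolding mon_erase_def mon_upd_def by (auto simp: fun_eq_iff)
  consider "fst x j = 0 \<and> snd x j = 0" | "fst x j = 1 \<and> snd x j = 1"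
    | "\<not> (fst x j = 0 \<and> snd x j = 0)" "\<not> (fst x j = 1 \<and> snd x j = 1)" by blast
  then show ?case
  proof cases
    case 1
    then have "mon_erase (set (j # js)) x = mon_erase (set js) x"
      unfolding mon_erase_def by (auto simp: fun_eq_iff)
    then show ?thesis using 1 sw prod Cons.IH[OF d] by (simp add: gen_coeff_0_0)
  next
    case 2
    then show ?thesis using sw prod c_upd erase_upd Cons.IH[OF d, of "mon_upd x j 0 0"]
      by (simp add: gen_coeff_0_0)
  next
    case 3
    have "gen_coeff 0 0 (fst x j) (snd x j) = (0::'k)"
      by (simp only: gen_coeff_0_0 if_not_P[OF 3(1)] if_not_P[OF 3(2)])
    moreover have "sandwich_idems (j # js) g x = 0"
      by (simp only: sw if_not_P[OF 3(1)] if_not_P[OF 3(2)])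
    ultimately show ?thesis using prod by simp
  qed
qed


section \<open>Every nonzero ideal contains \<open>F(1) \<otimes> \<dots> \<otimes> F(n)\<close>\<close>

definition Fgen :: "nat \<Rightarrow> (nat \<Rightarrow> nat) \<Rightarrow> (nat \<Rightarrow> nat) \<Rightarrow> monom \<Rightarrow> 'k::field" where
  "Fgen n a b = prodlist (map (\<lambda>j. gen1 j (a j) (b j)) [0..<n])"

definition idem_prod :: "nat \<Rightarrow> monom \<Rightarrow> 'k::field" where
  "idem_prod n = Fgen n (\<lambda>_. 0) (\<lambda>_. 0)"

lemma Ftens_eq_lin_span: "Ftens n = lin_span {Fgen n a b | a b. True}"
  unfolding Ftens_def Fgen_def ..

lemma idem_prod_eq_prodlist: "idem_prod n = prodlist (map idem [0..<n])"
  unfolding idem_prod_def Fgen_def idem_def by simp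

lemma Fgen_eq:
  "Fgen n a b x = (if x \<in> monset n
     then \<Prod>j<n. gen_coeff (a j) (b j) (fst x j) (snd x j) else (0::'k::field))"
proof -
  have "\<forall>j<n. \<forall>y. (gen1 j (a j) (b j) :: monom \<Rightarrow> 'k) y \<noteq> 0 \<longrightarrow> (\<exists>c d. y = sing j c d)"
    using gen1_support by blast
  then show ?thesis unfolding Fgen_def by (simp add: prodlist_single_var gen1_sing)
qed

lemma idem_prod_eq:
  "idem_prod n x = (if x \<in> monset n then \<Prod>j<n. gen_coeff 0 0 (fst x j) (snd x j) else (0::'k::field))"
  unfolding idem_prod_def Fgen_eq ..

lemma Fgen_Sn: "(Fgen n a b :: monom \<Rightarrow> 'k::field) \<in> Sn n"
  unfolding Fgen_def by (rule prodlist_Sn) (auto intro: gen1_Sn)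

lemma Fgen_neq_0_iff:
  assumes "x \<in> monset n"
  shows "(Fgen n a b x :: 'k::field) \<noteq> 0 \<longleftrightarrow>
    (\<forall>j<n. (fst x j = a j \<and> snd x j = b j) \<or> (fst x j = Suc (a j) \<and> snd x j = Suc (b j)))"
  using assms by (simp add: Fgen_eq gen_coeff_eq_0_iff) blast

lemma idem_prod_unit [simp]: "(idem_prod n unit_mon :: 'k::field) = 1"
  by (simp add: idem_prod_eq gen_coeff_0_0)

text \<open>\<open>lower_mon m p = y\<^sup>\<alpha> p x\<^sup>\<beta>\<close> and \<open>raise_mon m p = x\<^sup>\<alpha> p y\<^sup>\<beta>\<close> for \<open>m = x\<^sup>\<alpha> y\<^sup>\<beta>\<close>.\<close>

definition lower_mon :: "monom \<Rightarrow> monom \<Rightarrow> monom" where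
  "lower_mon m p = mmul (mmul ((\<lambda>_. 0), fst m) p) (snd m, (\<lambda>_. 0))"

definition raise_mon :: "monom \<Rightarrow> monom \<Rightarrow> monom" where
  "raise_mon m p = mmul (mmul (fst m, (\<lambda>_. 0)) p) ((\<lambda>_. 0), snd m)"

lemma lower_mon_eq:
  "lower_mon m p = ((\<lambda>j. (fst p j - fst m j) + (snd m j - (snd p j + (fst m j - fst p j)))),
    (\<lambda>j. (snd p j + (fst m j - fst p j)) - snd m j))"
  unfolding lower_mon_def mmul_def by auto

lemma raise_mon_eq: "raise_mon m p = ((\<lambda>j. fst m j + fst p j), (\<lambda>j. snd m j + snd p j))"
  unfolding raise_mon_def mmul_def by auto

lemma lower_mon_eq_unit_iff:
  "lower_mon m p = unit_mon \<longleftrightarrow> (\<forall>j. fst p j \<le> fst m j \<and> snd p j + fst m j = snd m j + fst p j)"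
proof -
  have "lower_mon m p = unit_mon \<longleftrightarrow> (\<forall>j. (fst p j - fst m j) + (snd m j - (snd p j + (fst m j - fst p j))) = 0
      \<and> (snd p j + (fst m j - fst p j)) - snd m j = 0)"
    unfolding lower_mon_eq by (auto simp: fun_eq_iff)
  also have "\<dots> \<longleftrightarrow> (\<forall>j. fst p j \<le> fst m j \<and> snd p j + fst m j = snd m j + fst p j)"
    by (intro all_cong1) arith
  finally show ?thesis .
qed

lemma lower_mon_eq_unit_imp_eq:
  assumes p: "p \<in> monset n" and m: "m \<in> monset n" and unit: "lower_mon m p = unit_mon"
    and min: "(\<Sum>j<n. fst m j) \<le> (\<Sum>j<n. fst p j)"
  shows "p = m"
proof -
  have c: "fst p j \<le> fst m j" "snd p j + fst m j = snd m j + fst p j" for j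
    using unit unfolding lower_mon_eq_unit_iff by auto
  have "(\<Sum>j<n. fst p j) \<le> (\<Sum>j<n. fst m j)" by (rule sum_mono) (use c in auto)
  then have "(\<Sum>j<n. fst p j) = (\<Sum>j<n. fst m j)" using min by simp
  then have "fst p j = fst m j" if "j < n" for j
    by (rule sum_mono_inv) (use c that in auto)
  moreover have "fst p j = fst m j" if "\<not> j < n" for j
    using p m that unfolding mem_monset_iff by auto
  ultimately have fst: "fst p = fst m" by (auto simp: fun_eq_iff)
  then have "snd p = snd m" using c(2) by (auto simp: fun_eq_iff)
  with fst show ?thesis by (rule monom_eqI)
qed

lemma lower_mon_self: "lower_mon m m = unit_mon"
  unfolding lower_mon_eq_unit_iff by simp

lemma sandwich_all_idems:
  assumes g: "g \<in> Sn n"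
  shows "sandwich_idems [0..<n] g = (\<lambda>x. g unit_mon * idem_prod n x :: 'k::field)"
proof
  fix x
  have "sandwich_idems [0..<n] g x = (\<Prod>j<n. gen_coeff 0 0 (fst x j) (snd x j)) * g (mon_erase {..<n} x)"
    using sandwich_idems_eq[OF SnD(1)[OF g], of "[0..<n]" x] by (simp add: atLeast0LessThan)
  moreover have "mon_erase {..<n} x = unit_mon" if "x \<in> monset n"
    using that unfolding mon_erase_def mem_monset_iff by (auto simp: fun_eq_iff)
  moreover have "g (mon_erase {..<n} x) = 0" if "x \<notin> monset n"
  proof -
    have "mon_erase {..<n} x \<notin> monset n" using that unfolding mon_erase_def mem_monset_iff by auto
    then show ?thesis using SnD(2)[OF g] by blast
  qed
  ultimately show "sandwich_idems [0..<n] g x = g unit_mon * idem_prod n x"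
    by (cases "x \<in> monset n") (simp_all add: idem_prod_eq)
qed

lemma idem_prod_mem_ideal:
  assumes I: "is_ideal n I" and f: "f \<in> I" and nz: "f \<noteq> (\<lambda>_. 0)"
  shows "(idem_prod n :: monom \<Rightarrow> 'k::field) \<in> I"
proof -
  have fS: "f \<in> Sn n" using idealD(1)[OF I] f by blast
  let ?S = "{x. f x \<noteq> 0}" and ?deg = "\<lambda>p. \<Sum>j<n. fst p j"
  have "finite ?S" "?S \<noteq> {}" using SnD(1)[OF fS] nz by auto
  then obtain m where m: "f m \<noteq> 0" and min: "\<forall>p. f p \<noteq> 0 \<longrightarrow> ?deg m \<le> ?deg p"
    using Min_in[of "?deg ` ?S"] Min_le[of "?deg ` ?S"] by fastforce
  have mm: "m \<in> monset n" using SnD(2)[OF fS m] .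
  define g where "g = pushforward (lower_mon m) f"
  have "g \<in> I" unfolding g_def lower_mon_def
    by (rule ideal_sandwich_emon[OF I f]) (use mm in \<open>auto simp: mem_monset_iff\<close>)
  then have gS: "g \<in> Sn n" using idealD(1)[OF I] by blast
  have "\<forall>p. f p \<noteq> 0 \<longrightarrow> lower_mon m p = unit_mon \<longrightarrow> p = m"
    using lower_mon_eq_unit_imp_eq[OF SnD(2)[OF fS] mm] min by blast
  then have g_unit: "g unit_mon = f m"
    unfolding g_def by (simp add: pushforward_single lower_mon_self)
  have "sandwich_idems [0..<n] g \<in> I" by (rule sandwich_idems_mem_ideal[OF I \<open>g \<in> I\<close>]) auto
  then have "(\<lambda>x. (1 / f m) * (f m * idem_prod n x)) \<in> I"
    unfolding sandwich_all_idems[OF gS] g_unit by (rule ideal_smult[OF I])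
  then show ?thesis using m by simp
qed

lemma gen_coeff_shift: "gen_coeff a b (a + s) (b + t) = gen_coeff 0 0 s t"
  unfolding gen_coeff_def by auto

lemma Fgen_eq_pushforward_raise_mon:
  "(Fgen n a b :: monom \<Rightarrow> 'k::field) = pushforward (raise_mon (mon_trunc n a b)) (idem_prod n)"
proof
  fix x
  let ?m = "mon_trunc n a b"
  have inj: "raise_mon ?m p = raise_mon ?m q \<Longrightarrow> p = q" for p q
    unfolding raise_mon_eq by (intro monom_eqI) (auto simp: fun_eq_iff)
  show "Fgen n a b x = (pushforward (raise_mon ?m) (idem_prod n) x :: 'k)"
  proof (cases "\<exists>p. raise_mon ?m p = x")
    case True
    then obtain p where x: "x = raise_mon ?m p" by blast
    have "pushforward (raise_mon ?m) (idem_prod n) x = (idem_prod n p :: 'k)"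
      unfolding x by (subst pushforward_single[where a = p]) (auto dest: inj)
    moreover have "x \<in> monset n \<longleftrightarrow> p \<in> monset n"
      unfolding x raise_mon_eq mem_monset_iff mon_trunc_def by auto
    moreover have "fst x j = a j + fst p j" "snd x j = b j + snd p j" if "j < n" for j
      using that unfolding x raise_mon_eq mon_trunc_def by auto
    ultimately show ?thesis by (simp add: Fgen_eq idem_prod_eq gen_coeff_shift)
  next
    case False
    then have "pushforward (raise_mon ?m) (idem_prod n) x = (0::'k)"
      by (intro pushforward_eq_0) blast
    moreover have "\<exists>j. \<not> (fst ?m j \<le> fst x j \<and> snd ?m j \<le> snd x j)"
    proof (rule ccontr)
      assume "\<nexists>j. \<not> (fst ?m j \<le> fst x j \<and> snd ?m j \<le> snd x j)"
      then have "raise_mon ?m ((\<lambda>j. fst x j - fst ?m j), (\<lambda>j. snd x j - snd ?m j)) = x"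
        unfolding raise_mon_eq by (intro monom_eqI) auto
      with False show False by blast
    qed
    then obtain j where j: "\<not> (fst ?m j \<le> fst x j \<and> snd ?m j \<le> snd x j)" by blast
    moreover have "j < n" using j unfolding mon_trunc_def by (cases "j < n") auto
    moreover have "(Fgen n a b x :: 'k) = 0"
    proof (cases "x \<in> monset n")
      case True
      have "\<not> (fst x j = a j \<and> snd x j = b j) \<and> \<not> (fst x j = Suc (a j) \<and> snd x j = Suc (b j))"
        using j \<open>j < n\<close> unfolding mon_trunc_def by auto
      then show ?thesis using Fgen_neq_0_iff[OF True] \<open>j < n\<close> by blast
    qed (simp add: Fgen_eq)
    ultimately show ?thesis by simp
  qed
qed

lemma Ftens_subset_ideal:
  assumes I: "is_ideal n I" and idem: "idem_prod n \<in> I"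
  shows "Ftens n \<subseteq> (I :: (monom \<Rightarrow> 'k::field) set)"
proof -
  have "Fgen n a b \<in> I" for a b
    unfolding Fgen_eq_pushforward_raise_mon raise_mon_def
    by (rule ideal_sandwich_emon[OF I idem]) (auto simp: mem_monset_iff mon_trunc_def)
  then show ?thesis unfolding Ftens_eq_lin_span by (intro lin_span_subset_ideal[OF I]) blast
qed


section \<open>The intersection of the \<open>p\<^sub>i\<close>\<close>

lemma prodlist_mem_ideal:
  assumes I: "is_ideal n I" and fs: "set fs \<subseteq> Sn n" and f: "f \<in> set fs" "f \<in> I"
  shows "prodlist fs \<in> (I :: (monom \<Rightarrow> 'k::field) set)"
  using fs f(1)
proof (induction fs)
  case (Cons g gs)
  have gs: "prodlist gs \<in> Sn n" using Cons.prems(1) by (intro prodlist_Sn) auto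
  show ?case
  proof (cases "f = g")
    case True
    then show ?thesis unfolding prodlist_Cons using idealD(6)[OF I f(2) gs] by simp
  next
    case False
    then have "prodlist gs \<in> I" using Cons by auto
    then show ?thesis unfolding prodlist_Cons using idealD(5)[OF I] Cons.prems(1) by simp
  qed
qed simp

lemma gen1_mem_loc_kernel:
  assumes "i < n"
  shows "(gen1 i a b :: monom \<Rightarrow> 'k::field) \<in> loc_kernel n i"
proof -
  have "loc_mon i (sing i a b) = loc_mon i (sing i (Suc a) (Suc b))"
    unfolding loc_mon_def sing_def by auto
  then show ?thesis unfolding gen1_def
    by (rule emon_diff_mem_loc_kernel[OF sing_monset[OF assms] sing_monset[OF assms]])
qed

lemma Fgen_mem_loc_kernel:
  assumes "i < n"
  shows "(Fgen n a b :: monom \<Rightarrow> 'k::field) \<in> loc_kernel n i"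
  unfolding Fgen_def using assms
  by (intro prodlist_mem_ideal[OF is_ideal_loc_kernel, of _ _ "gen1 i (a i) (b i)"])
    (auto intro: gen1_Sn gen1_mem_loc_kernel)

definition total_level :: "nat \<Rightarrow> monom \<Rightarrow> nat" where
  "total_level n x = (\<Sum>j<n. level j x)"

lemma level_pos_if_max_total_level:
  assumes f: "\<forall>i<n. f \<in> loc_kernel n i" and m: "f m \<noteq> 0"
    and max: "\<forall>x. f x \<noteq> 0 \<longrightarrow> total_level n x \<le> total_level n m" and i: "i < n"
  shows "level i m > 0"
proof (rule level_pos_if_max_in_fibre[OF f[rule_format, OF i] m], intro allI impI)
  fix x assume fx: "f x \<noteq> 0" and fibre: "loc_mon i x = loc_mon i m"
  have split: "total_level n y = level i y + (\<Sum>j\<in>{..<n}-{i}. level j y)" for y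
    unfolding total_level_def by (rule sum.remove) (use i in auto)
  have "level j x = level j m" if "j \<noteq> i" for j
  proof -
    have "((fst x)(i := 0)) j = ((fst m)(i := 0)) j" "((snd x)(i := 0)) j = ((snd m)(i := 0)) j"
      using fibre unfolding loc_mon_def by auto
    then show ?thesis using that unfolding level_def by simp
  qed
  then have "(\<Sum>j\<in>{..<n}-{i}. level j x) = (\<Sum>j\<in>{..<n}-{i}. level j m)"
    by (intro sum.cong) auto
  then show "level i x \<le> level i m" using max fx split[of x] split[of m] by auto
qed

text \<open>Descent on the total level: a coefficient at \<open>x\<^sup>\<alpha> y\<^sup>\<beta>\<close> of maximal total level is cancelled
  by \<open>Fgen n (\<alpha> - 1) (\<beta> - 1)\<close>, all of whose other monomials have lower total level.\<close>

lemma Inter_loc_kernel_subset_Ftens: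
  "{f \<in> Sn n. \<forall>i<n. f \<in> loc_kernel n i} \<subseteq> (Ftens n :: (monom \<Rightarrow> 'k::field) set)"
  (is "?K \<subseteq> _")
proof (rule descent[where L = "total_level n"])
  show "\<And>f. f \<in> ?K \<Longrightarrow> finite {x. f x \<noteq> 0}" using SnD(1) by blast
  show "(\<lambda>x. f x - c * g x) \<in> ?K" if "f \<in> ?K" "g \<in> ?K" for f g c
    using that Sn_lin_comb[of f n g 1 "- c"] loc_kernel_diff[of f n _ g c] by auto
  show "(\<lambda>_. 0) \<in> (Ftens n :: (monom \<Rightarrow> 'k) set)"
    unfolding Ftens_def by (rule lin_span_zero)
  show "\<And>f g c. f \<in> (Ftens n :: (monom \<Rightarrow> 'k) set) \<Longrightarrow> g \<in> Ftens n \<Longrightarrow> (\<lambda>x. f x + c * g x) \<in> Ftens n"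
    unfolding Ftens_def by (rule lin_span_add_scaled)
  fix f :: "monom \<Rightarrow> 'k" and m
  assume f: "f \<in> ?K" and m: "f m \<noteq> 0" and max: "\<forall>x. f x \<noteq> 0 \<longrightarrow> total_level n x \<le> total_level n m"
  have mm: "m \<in> monset n" using SnD(2)[of f n m] f m by blast
  define a where "a = (\<lambda>j. fst m j - 1)"
  define b where "b = (\<lambda>j. snd m j - 1)"
  have mj: "fst m j = Suc (a j) \<and> snd m j = Suc (b j)" if "j < n" for j
    using level_pos_if_max_total_level[of n f m j] f m max that unfolding a_def b_def level_def by auto
  let ?g = "Fgen n a b :: monom \<Rightarrow> 'k"
  have lower: "total_level n x < total_level n m" if gx: "?g x \<noteq> 0" and xm: "x \<noteq> m" for x
  proof -
    have x: "x \<in> monset n" using gx by (auto simp: Fgen_eq split: if_splits)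
    have cj: "\<forall>j<n. (fst x j = a j \<and> snd x j = b j) \<or> (fst x j = Suc (a j) \<and> snd x j = Suc (b j))"
      using gx Fgen_neq_0_iff[OF x] by blast
    obtain j where j: "j < n" "\<not> (fst x j = fst m j \<and> snd x j = snd m j)"
      using xm monset_eq_iff[OF x mm] by blast
    have "\<forall>j\<in>{..<n}. level j x \<le> level j m" using cj mj unfolding level_def by auto
    moreover have "level j x < level j m" using cj j mj[of j] unfolding level_def by auto
    ultimately show ?thesis unfolding total_level_def
      by (intro sum_strict_mono_ex1) (use j in auto)
  qed
  have "?g \<in> ?K" using Fgen_Sn Fgen_mem_loc_kernel by blast
  moreover have "?g \<in> Ftens n" unfolding Ftens_eq_lin_span by (rule lin_span_base) blast
  moreover have "?g m \<noteq> 0" unfolding Fgen_neq_0_iff[OF mm] using mj by blast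
  ultimately show "\<exists>g :: monom \<Rightarrow> 'k. g \<in> ?K \<and> g \<in> Ftens n \<and> g m \<noteq> 0 \<and>
      (\<forall>x. g x \<noteq> 0 \<longrightarrow> x \<noteq> m \<longrightarrow> total_level n x < total_level n m)"
    using lower by blast
qed


section \<open>The ideals \<open>p\<^sub>i\<close> are prime\<close>

lemma finite_support_slice:
  "finite {u. g u \<noteq> 0} \<Longrightarrow> finite {d. g (w, d) \<noteq> 0}"
  by (rule finite_subset[of _ "snd ` {u. g u \<noteq> 0}"]) (auto intro: image_eqI[of _ snd "(w, _)"])

lemma pushforward_loc_mon_lower_mon:
  assumes f: "finite {x. f x \<noteq> 0}" and w: "fst w i = 0" "snd w i = 0"
  shows "pushforward (loc_mon i) (pushforward (lower_mon w) f)
    = pushforward (map_prod (lower_mon w) id) (pushforward (loc_mon i) (f :: monom \<Rightarrow> 'k::field))"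
proof -
  have "loc_mon i \<circ> lower_mon w = map_prod (lower_mon w) id \<circ> loc_mon i"
    using w unfolding loc_mon_def lower_mon_eq by (auto simp: fun_eq_iff)
  then show ?thesis by (simp add: pushforward_comp[OF f])
qed

text \<open>Lower an element by a monomial of least degree in its image in the localisation.\<close>

lemma exists_loc_coeff_unit:
  assumes i: "i < n" and I: "is_ideal n I" and f: "f \<in> I" "f \<notin> loc_kernel n i"
  shows "\<exists>g\<in>I. \<exists>d. pushforward (loc_mon i) g (unit_mon, d) \<noteq> (0::'k::field)"
proof -
  have fS: "f \<in> Sn n" using idealD(1)[OF I] f(1) by blast
  let ?P = "pushforward (loc_mon i) f" and ?deg = "\<lambda>w. \<Sum>j<n. fst w j"
  let ?W = "fst ` {u. ?P u \<noteq> 0}"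
  have W: "w \<in> monset n \<and> fst w i = 0 \<and> snd w i = 0" if w: "w \<in> ?W" for w
  proof -
    obtain x where "f x \<noteq> 0" "w = fst (loc_mon i x)"
      using w support_pushforward[of "loc_mon i" f] by blast
    with SnD(2)[OF fS] show ?thesis unfolding loc_mon_def mem_monset_iff by auto
  qed
  have "finite ?W" using finite_support_pushforward[OF SnD(1)[OF fS], of "loc_mon i"] by simp
  moreover have "?W \<noteq> {}" using f fS unfolding loc_kernel_def by auto
  ultimately obtain w where w: "w \<in> ?W" and min: "\<forall>w'\<in>?W. ?deg w \<le> ?deg w'"
    using Min_in[of "?deg ` ?W"] Min_le[of "?deg ` ?W"] by fastforce
  then obtain d where d: "?P (w, d) \<noteq> 0" by auto
  define g where "g = pushforward (lower_mon w) f"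
  have "g \<in> I" unfolding g_def lower_mon_def
    by (rule ideal_sandwich_emon[OF I f(1)]) (use W[OF w] in \<open>auto simp: mem_monset_iff\<close>)
  have "\<forall>u. ?P u \<noteq> 0 \<longrightarrow> map_prod (lower_mon w) id u = (unit_mon, d) \<longrightarrow> u = (w, d)"
  proof (intro allI impI)
    fix u assume "?P u \<noteq> 0" and u: "map_prod (lower_mon w) id u = (unit_mon, d)"
    then have "fst u \<in> ?W" by auto
    then have "fst u = w"
      using lower_mon_eq_unit_imp_eq[of "fst u" n w] W w min u by (cases u) auto
    then show "u = (w, d)" using u by (cases u) auto
  qed
  moreover have "pushforward (loc_mon i) g = pushforward (map_prod (lower_mon w) id) ?P"
    unfolding g_def by (rule pushforward_loc_mon_lower_mon[OF SnD(1)[OF fS]]) (use W[OF w] in auto)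
  ultimately have "pushforward (loc_mon i) g (unit_mon, d) = ?P (w, d)"
    by (simp add: pushforward_single lower_mon_self)
  then show ?thesis using \<open>g \<in> I\<close> d by metis
qed

lemma exists_loc_coeff_unit_right:
  assumes i: "i < n" and I: "is_ideal n I" and f: "f \<in> I" "f \<notin> loc_kernel n i"
  shows "\<exists>h\<in>I. (\<exists>d. pushforward (loc_mon i) h (unit_mon, d) \<noteq> (0::'k::field)) \<and>
     (\<forall>w d. fst w = (\<lambda>_. 0) \<longrightarrow> snd w \<noteq> (\<lambda>_. 0) \<longrightarrow> pushforward (loc_mon i) h (w, d) = 0)"
proof -
  obtain g :: "monom \<Rightarrow> 'k" where g: "g \<in> I" and d: "\<exists>d. pushforward (loc_mon i) g (unit_mon, d) \<noteq> 0"
    using exists_loc_coeff_unit[OF i I f] by blast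
  have gS: "g \<in> Sn n" using idealD(1)[OF I] g by blast
  define C where "C = filter (\<lambda>j. j \<noteq> i) [0..<n]"
  have C: "set C \<subseteq> {..<n}" "\<And>j. j \<in> set C \<longleftrightarrow> j < n \<and> j \<noteq> i" unfolding C_def by auto
  define h where "h = mult_idems_right C g"
  have hI: "h \<in> I" unfolding h_def by (rule mult_idems_right_mem_ideal[OF I g C(1)])
  have hS: "h \<in> Sn n" using idealD(1)[OF I] hI by blast
  have "pushforward (loc_mon i) h (unit_mon, d) = pushforward (loc_mon i) g (unit_mon, d)" for d
  proof (rule pushforward_fibre_cong)
    fix x assume "loc_mon i x = (unit_mon, d)"
    then have "(fst x)(i := 0) = (\<lambda>_. 0)" "(snd x)(i := 0) = (\<lambda>_. 0)" unfolding loc_mon_def by auto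
    then have "\<forall>j\<in>set C. fst x j = 0 \<and> snd x j = 0" using C(2) by (metis fun_upd_other)
    then show "h x = g x" unfolding h_def by (rule mult_idems_right_eq[OF SnD(1)[OF gS]])
  qed
  moreover have "pushforward (loc_mon i) h (w, d) = 0"
    if w: "fst w = (\<lambda>_. 0)" "snd w \<noteq> (\<lambda>_. 0)" for w d
  proof (rule pushforward_eq_0, rule notI)
    fix x assume hx: "h x \<noteq> 0" and x: "loc_mon i x = (w, d)"
    obtain j where j: "snd w j \<noteq> 0" using w(2) by auto
    have o: "(fst x)(i := 0) = fst w" "(snd x)(i := 0) = snd w" using x unfolding loc_mon_def by auto
    have ji: "j \<noteq> i" using o(2) j by (metis fun_upd_same)
    have "snd x j \<noteq> 0" "fst x j = 0" using o w(1) j ji by (metis fun_upd_other)+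
    moreover have "j < n" using SnD(2)[OF hS hx] \<open>snd x j \<noteq> 0\<close> unfolding mem_monset_iff by (meson not_le)
    ultimately have "h x = 0" unfolding h_def
      by (intro mult_idems_right_eq_0[OF SnD(1)[OF gS], of j]) (use C(2) ji in auto)
    with hx show False by simp
  qed
  ultimately show ?thesis using hI d by metis
qed

lemma exists_loc_coeff_unit_left:
  assumes i: "i < n" and I: "is_ideal n I" and f: "f \<in> I" "f \<notin> loc_kernel n i"
  shows "\<exists>h\<in>I. (\<exists>d. pushforward (loc_mon i) h (unit_mon, d) \<noteq> (0::'k::field)) \<and>
     (\<forall>w d. snd w = (\<lambda>_. 0) \<longrightarrow> fst w \<noteq> (\<lambda>_. 0) \<longrightarrow> pushforward (loc_mon i) h (w, d) = 0)"
proof -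
  obtain g :: "monom \<Rightarrow> 'k" where g: "g \<in> I" and d: "\<exists>d. pushforward (loc_mon i) g (unit_mon, d) \<noteq> 0"
    using exists_loc_coeff_unit[OF i I f] by blast
  have gS: "g \<in> Sn n" using idealD(1)[OF I] g by blast
  define C where "C = filter (\<lambda>j. j \<noteq> i) [0..<n]"
  have C: "set C \<subseteq> {..<n}" "\<And>j. j \<in> set C \<longleftrightarrow> j < n \<and> j \<noteq> i" unfolding C_def by auto
  define h where "h = mult_idems_left C g"
  have hI: "h \<in> I" unfolding h_def by (rule mult_idems_left_mem_ideal[OF I g C(1)])
  have hS: "h \<in> Sn n" using idealD(1)[OF I] hI by blast
  have "pushforward (loc_mon i) h (unit_mon, d) = pushforward (loc_mon i) g (unit_mon, d)" for d
  proof (rule pushforward_fibre_cong)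
    fix x assume "loc_mon i x = (unit_mon, d)"
    then have "(fst x)(i := 0) = (\<lambda>_. 0)" "(snd x)(i := 0) = (\<lambda>_. 0)" unfolding loc_mon_def by auto
    then have "\<forall>j\<in>set C. fst x j = 0 \<and> snd x j = 0" using C(2) by (metis fun_upd_other)
    then show "h x = g x" unfolding h_def by (rule mult_idems_left_eq[OF SnD(1)[OF gS]])
  qed
  moreover have "pushforward (loc_mon i) h (w, d) = 0"
    if w: "snd w = (\<lambda>_. 0)" "fst w \<noteq> (\<lambda>_. 0)" for w d
  proof (rule pushforward_eq_0, rule notI)
    fix x assume hx: "h x \<noteq> 0" and x: "loc_mon i x = (w, d)"
    obtain j where j: "fst w j \<noteq> 0" using w(2) by auto
    have o: "(fst x)(i := 0) = fst w" "(snd x)(i := 0) = snd w" using x unfolding loc_mon_def by auto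
    have ji: "j \<noteq> i" using o(1) j by (metis fun_upd_same)
    have "fst x j \<noteq> 0" "snd x j = 0" using o w(1) j ji by (metis fun_upd_other)+
    moreover have "j < n" using SnD(2)[OF hS hx] \<open>fst x j \<noteq> 0\<close> unfolding mem_monset_iff by (meson not_le)
    ultimately have "h x = 0" unfolding h_def
      by (intro mult_idems_left_eq_0[OF SnD(1)[OF gS], of j]) (use C(2) ji in auto)
    with hx show False by simp
  qed
  ultimately show ?thesis using hI d by metis
qed


text \<open>Top powers of \<open>x\<^sub>i\<close> multiply: a product of monomials is \<open>1\<close> only if the left one has no
  \<open>x\<close>'s and the right one no \<open>y\<close>'s, and the hypotheses exclude all such monomials but \<open>1\<close>.\<close>

lemma Smult_not_mem_loc_kernel:
  assumes h1: "h1 \<in> Sn n" "\<exists>d. pushforward (loc_mon i) h1 (unit_mon, d) \<noteq> (0::'k::field)"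
      "\<forall>w d. fst w = (\<lambda>_. 0) \<longrightarrow> snd w \<noteq> (\<lambda>_. 0) \<longrightarrow> pushforward (loc_mon i) h1 (w, d) = 0"
    and h2: "h2 \<in> Sn n" "\<exists>d. pushforward (loc_mon i) h2 (unit_mon, d) \<noteq> 0"
      "\<forall>w d. snd w = (\<lambda>_. 0) \<longrightarrow> fst w \<noteq> (\<lambda>_. 0) \<longrightarrow> pushforward (loc_mon i) h2 (w, d) = 0"
  shows "Smult h1 h2 \<notin> loc_kernel n i"
proof
  assume prod: "Smult h1 h2 \<in> loc_kernel n i"
  let ?P1 = "pushforward (loc_mon i) h1" and ?P2 = "pushforward (loc_mon i) h2"
  let ?S1 = "{d. ?P1 (unit_mon, d) \<noteq> 0}" and ?S2 = "{d. ?P2 (unit_mon, d) \<noteq> 0}"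
  have "finite ?S1" "finite ?S2"
    by (rule finite_support_slice finite_support_pushforward SnD(1) h1(1) h2(1))+
  define D1 where "D1 = Max ?S1"
  define D2 where "D2 = Max ?S2"
  have D1: "?P1 (unit_mon, D1) \<noteq> 0" "\<And>d. ?P1 (unit_mon, d) \<noteq> 0 \<Longrightarrow> d \<le> D1"
    unfolding D1_def using Max_in[OF \<open>finite ?S1\<close>] Max_ge[OF \<open>finite ?S1\<close>] h1(2) by auto
  have D2: "?P2 (unit_mon, D2) \<noteq> 0" "\<And>d. ?P2 (unit_mon, d) \<noteq> 0 \<Longrightarrow> d \<le> D2"
    unfolding D2_def using Max_in[OF \<open>finite ?S2\<close>] Max_ge[OF \<open>finite ?S2\<close>] h2(2) by auto
  let ?F = "\<lambda>(u, v). ?P1 u * ?P2 v"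
  have uniq: "\<forall>uv. ?F uv \<noteq> 0 \<longrightarrow> case_prod loc_mult uv = (unit_mon, D1 + D2)
      \<longrightarrow> uv = ((unit_mon, D1), (unit_mon, D2))"
  proof (intro allI impI)
    fix uv assume F: "?F uv \<noteq> 0" and uv_mult: "case_prod loc_mult uv = (unit_mon, D1 + D2)"
    obtain u v where uv: "uv = (u, v)" by (cases uv)
    have p1: "?P1 u \<noteq> 0" and p2: "?P2 v \<noteq> 0" using F uv by auto
    have "mmul (fst u) (fst v) = unit_mon" and ds: "snd u + snd v = D1 + D2"
      using uv_mult uv unfolding loc_mult_def by auto
    then have c: "fst (fst u) = (\<lambda>_. 0)" "snd (fst v) = (\<lambda>_. 0)" "snd (fst u) = fst (fst v)"
      unfolding mmul_eq_unit_iff by auto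
    have "snd (fst u) = (\<lambda>_. 0)"
      using h1(3) c(1) p1 by (metis prod.collapse)
    then have fu: "fst u = unit_mon" and fv: "fst v = unit_mon"
      using c by (auto intro: monom_eqI)
    then have "?P1 (unit_mon, snd u) \<noteq> 0" "?P2 (unit_mon, snd v) \<noteq> 0"
      using p1 p2 by (metis prod.collapse)+
    then have "snd u \<le> D1" "snd v \<le> D2" using D1(2) D2(2) by blast+
    then have "snd u = D1" "snd v = D2" using ds by linarith+
    then show "uv = ((unit_mon, D1), (unit_mon, D2))"
      using uv fu fv by (metis prod.collapse)
  qed
  have "pushforward (loc_mon i) (Smult h1 h2) (unit_mon, D1 + D2) = ?F ((unit_mon, D1), (unit_mon, D2))"
    using pushforward_loc_mon_Smult[OF SnD(1)[OF h1(1)] SnD(1)[OF h2(1)], of i]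
      pushforward_single[OF uniq] by (simp add: loc_mult_def)
  also have "\<dots> \<noteq> 0" using D1(1) D2(1) by simp
  finally show False using loc_kernelD(2)[OF prod] by simp
qed

lemma is_prime_loc_kernel:
  assumes i: "i < n"
  shows "is_prime n (loc_kernel n i :: (monom \<Rightarrow> 'k::field) set)"
  unfolding is_prime_def
proof (intro conjI allI impI)
  show "is_ideal n (loc_kernel n i :: (monom \<Rightarrow> 'k) set)" by (rule is_ideal_loc_kernel)
  have "pushforward (loc_mon i) (Sone :: monom \<Rightarrow> 'k) (loc_mon i unit_mon) \<noteq> 0"
    unfolding Sone_eq_emon pushforward_emon by simp
  then show "(loc_kernel n i :: (monom \<Rightarrow> 'k) set) \<noteq> Sn n"
    using Sone_Sn loc_kernelD(2) by blast
  fix I J :: "(monom \<Rightarrow> 'k) set"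
  assume "is_ideal n I \<and> is_ideal n J \<and> iprod n I J \<subseteq> loc_kernel n i"
  then have I: "is_ideal n I" and J: "is_ideal n J" and sub: "iprod n I J \<subseteq> loc_kernel n i" by auto
  show "I \<subseteq> loc_kernel n i \<or> J \<subseteq> loc_kernel n i"
  proof (rule ccontr)
    assume "\<not> (I \<subseteq> loc_kernel n i \<or> J \<subseteq> loc_kernel n i)"
    then obtain f g where f: "f \<in> I" "f \<notin> loc_kernel n i" and g: "g \<in> J" "g \<notin> loc_kernel n i" by blast
    obtain h1 where h1: "h1 \<in> I" "\<exists>d. pushforward (loc_mon i) h1 (unit_mon, d) \<noteq> 0"
      "\<forall>w d. fst w = (\<lambda>_. 0) \<longrightarrow> snd w \<noteq> (\<lambda>_. 0) \<longrightarrow> pushforward (loc_mon i) h1 (w, d) = 0"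
      using exists_loc_coeff_unit_right[OF i I f] by blast
    obtain h2 where h2: "h2 \<in> J" "\<exists>d. pushforward (loc_mon i) h2 (unit_mon, d) \<noteq> 0"
      "\<forall>w d. snd w = (\<lambda>_. 0) \<longrightarrow> fst w \<noteq> (\<lambda>_. 0) \<longrightarrow> pushforward (loc_mon i) h2 (w, d) = 0"
      using exists_loc_coeff_unit_left[OF i J g] by blast
    have "h1 \<in> Sn n" "h2 \<in> Sn n" using idealD(1) I J h1(1) h2(1) by blast+
    then have "Smult h1 h2 \<notin> loc_kernel n i"
      using Smult_not_mem_loc_kernel h1(2,3) h2(2,3) by blast
    then show False using sub Smult_mem_iprod[OF h1(1) h2(1)] by blast
  qed
qed

lemma loc_kernel_not_subset:
  assumes "i < n" "i \<noteq> j"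
  shows "\<not> (loc_kernel n i :: (monom \<Rightarrow> 'k::field) set) \<subseteq> loc_kernel n j"
  using idem_mem_loc_kernel[OF assms(1)] idem_not_mem_loc_kernel[OF assms(2)] by blast

lemma loc_kernel_neq_zero: "i < n \<Longrightarrow> {(\<lambda>_. 0 :: 'k::field)} \<subset> loc_kernel n i"
  using idem_mem_loc_kernel[of i n] idem_neq_0[of i] idealD(2)[OF is_ideal_loc_kernel] by blast

section \<open>The zero ideal is prime\<close>

lemma idem_prod_neq_0_imp:
  assumes "(idem_prod n p :: 'k::field) \<noteq> 0" "fst p j = 0"
  shows "snd p j = 0"
proof -
  have p: "p \<in> monset n" using assms(1) by (simp add: idem_prod_eq split: if_splits)
  then have "\<forall>j<n. (gen_coeff 0 0 (fst p j) (snd p j) :: 'k) \<noteq> 0"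
    using assms(1) by (simp add: idem_prod_eq)
  then show ?thesis using p assms(2) unfolding gen_coeff_0_0 mem_monset_iff
    by (metis not_le zero_neq_one)
qed

lemma Smult_idem_prod_unit: "(Smult (idem_prod n) (idem_prod n) unit_mon :: 'k::field) = 1"
proof -
  let ?F = "\<lambda>(p, q). (idem_prod n p :: 'k) * idem_prod n q"
  have "\<forall>pq. ?F pq \<noteq> 0 \<longrightarrow> case_prod mmul pq = unit_mon \<longrightarrow> pq = (unit_mon, unit_mon)"
  proof (intro allI impI)
    fix pq assume F: "?F pq \<noteq> 0" and m: "case_prod mmul pq = unit_mon"
    obtain p q where pq: "pq = (p, q)" by (cases pq)
    have "(idem_prod n p :: 'k) \<noteq> 0" using F pq by auto
    moreover have c: "fst p = (\<lambda>_. 0)" "snd q = (\<lambda>_. 0)" "snd p = fst q"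
      using m pq mmul_eq_unit_iff by auto
    ultimately have "snd p = (\<lambda>_. 0)"
      using idem_prod_neq_0_imp[of n p] by (auto simp: fun_eq_iff)
    then show "pq = (unit_mon, unit_mon)" using c pq by (auto intro: monom_eqI)
  qed
  then show ?thesis unfolding Smult_eq_pushforward by (simp add: pushforward_single)
qed

lemma is_prime_zero: "is_prime n {(\<lambda>_. 0 :: 'k::field)}"
  unfolding is_prime_def
proof (intro conjI allI impI)
  show "is_ideal n {(\<lambda>_. 0 :: 'k)}" by (rule is_ideal_zero)
  have "Sone \<noteq> (\<lambda>_. 0 :: 'k)" unfolding Sone_def by (auto simp: fun_eq_iff)
  then show "{(\<lambda>_. 0 :: 'k)} \<noteq> Sn n" using Sone_Sn by blast
  fix I J :: "(monom \<Rightarrow> 'k) set"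
  assume "is_ideal n I \<and> is_ideal n J \<and> iprod n I J \<subseteq> {(\<lambda>_. 0)}"
  then have I: "is_ideal n I" and J: "is_ideal n J" and sub: "iprod n I J \<subseteq> {(\<lambda>_. 0)}" by auto
  show "I \<subseteq> {(\<lambda>_. 0)} \<or> J \<subseteq> {(\<lambda>_. 0)}"
  proof (rule ccontr)
    assume "\<not> (I \<subseteq> {(\<lambda>_. 0)} \<or> J \<subseteq> {(\<lambda>_. 0)})"
    then obtain f g where "f \<in> I" "f \<noteq> (\<lambda>_. 0)" "g \<in> J" "g \<noteq> (\<lambda>_. 0)" by blast
    then have "idem_prod n \<in> I" "idem_prod n \<in> J" using idem_prod_mem_ideal I J by blast+
    then have "Smult (idem_prod n) (idem_prod n) = (\<lambda>_. 0 :: 'k)"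
      using sub Smult_mem_iprod by blast
    then show False using Smult_idem_prod_unit[of n] by (metis zero_neq_one)
  qed
qed


lemma is_prime_is_ideal: "is_prime n P \<Longrightarrow> is_ideal n P"
  unfolding is_prime_def by blast

lemma is_primeD:
  "is_prime n P \<Longrightarrow> is_ideal n I \<Longrightarrow> is_ideal n J \<Longrightarrow> iprod n I J \<subseteq> P \<Longrightarrow> I \<subseteq> P \<or> J \<subseteq> P"
  unfolding is_prime_def by blast

lemma is_ideal_pp: "i < n \<Longrightarrow> is_ideal n (pp n i :: (monom \<Rightarrow> 'k::field) set)"
  by (simp add: pp_eq_loc_kernel is_ideal_loc_kernel)

definition ideal_prod_list :: "nat \<Rightarrow> nat list \<Rightarrow> (monom \<Rightarrow> 'k::field) set" where
  "ideal_prod_list n is = foldr (\<lambda>i J. iprod n (pp n i) J) is (Sn n)"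

lemma ideal_prod_list_Nil: "ideal_prod_list n [] = Sn n"
  unfolding ideal_prod_list_def by simp

lemma ideal_prod_list_Cons: "ideal_prod_list n (i # is) = iprod n (pp n i) (ideal_prod_list n is)"
  unfolding ideal_prod_list_def by simp

lemma pp_prod_eq_ideal_prod_list: "pp_prod n = ideal_prod_list n [0..<n]"
  unfolding pp_prod_def ideal_prod_list_def ..

lemma is_ideal_ideal_prod_list:
  "set is \<subseteq> {..<n} \<Longrightarrow> is_ideal n (ideal_prod_list n is :: (monom \<Rightarrow> 'k::field) set)"
proof (induction "is")
  case (Cons i "is")
  then have i: "i < n" and "is": "set is \<subseteq> {..<n}" by auto
  have "pp n i \<subseteq> (Sn n :: (monom \<Rightarrow> 'k) set)" by (rule idealD(1)[OF is_ideal_pp[OF i]])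
  moreover have "ideal_prod_list n is \<subseteq> (Sn n :: (monom \<Rightarrow> 'k) set)" by (rule idealD(1)[OF Cons.IH[OF "is"]])
  ultimately show ?case unfolding ideal_prod_list_Cons by (rule is_ideal_iprod)
qed (simp add: ideal_prod_list_Nil is_ideal_Sn)

lemma ideal_prod_list_subset_loc_kernel:
  "set is \<subseteq> {..<n} \<Longrightarrow> i \<in> set is \<Longrightarrow> ideal_prod_list n is \<subseteq> (loc_kernel n i :: (monom \<Rightarrow> 'k::field) set)"
proof (induction "is")
  case (Cons j "is")
  then have j: "j < n" and "is": "set is \<subseteq> {..<n}" by auto
  have "ideal_prod_list n (j # is) \<subseteq> pp n j \<inter> (ideal_prod_list n is :: (monom \<Rightarrow> 'k) set)"
    unfolding ideal_prod_list_Cons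
    by (rule iprod_subset_Int[OF is_ideal_pp[OF j] is_ideal_ideal_prod_list[OF "is"]])
  then show ?case using Cons pp_eq_loc_kernel[OF j] by auto
qed simp

lemma prodlist_idem_mem_ideal_prod_list:
  "set is \<subseteq> {..<n} \<Longrightarrow> prodlist (map idem is) \<in> (ideal_prod_list n is :: (monom \<Rightarrow> 'k::field) set)"
proof (induction "is")
  case (Cons i "is")
  then have i: "i < n" and "is": "set is \<subseteq> {..<n}" by auto
  have "(idem i :: monom \<Rightarrow> 'k) \<in> pp n i"
    unfolding pp_eq_loc_kernel[OF i] by (rule idem_mem_loc_kernel[OF i])
  then show ?case unfolding ideal_prod_list_Cons prodlist_Cons list.map
    by (rule Smult_mem_iprod[OF _ Cons.IH[OF "is"]])
qed (simp add: ideal_prod_list_Nil prodlist_Nil Sone_Sn)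

lemma prime_contains_factor_of_ideal_prod_list:
  assumes P: "is_prime n P"
  shows "set is \<subseteq> {..<n} \<Longrightarrow> ideal_prod_list n is \<subseteq> P \<Longrightarrow> \<exists>i\<in>set is. (loc_kernel n i :: (monom \<Rightarrow> 'k::field) set) \<subseteq> P"
proof (induction "is")
  case Nil
  have "P \<subseteq> Sn n" "P \<noteq> Sn n" using P unfolding is_prime_def is_ideal_def by auto
  then show ?case using Nil.prems by (simp add: ideal_prod_list_Nil)
next
  case (Cons i "is")
  then have i: "i < n" and "is": "set is \<subseteq> {..<n}" by auto
  have "pp n i \<subseteq> P \<or> ideal_prod_list n is \<subseteq> P"
    by (rule is_primeD[OF P is_ideal_pp[OF i] is_ideal_ideal_prod_list[OF "is"]])
      (use Cons.prems(2) in \<open>simp add: ideal_prod_list_Cons\<close>)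
  then show ?case using Cons.IH[OF "is"] pp_eq_loc_kernel[OF i] by auto
qed

lemma Ftens_subset_pp_prod: "Ftens n \<subseteq> (pp_prod n :: (monom \<Rightarrow> 'k::field) set)"
proof (rule Ftens_subset_ideal)
  show "is_ideal n (pp_prod n :: (monom \<Rightarrow> 'k) set)"
    unfolding pp_prod_eq_ideal_prod_list by (rule is_ideal_ideal_prod_list) auto
  show "idem_prod n \<in> (pp_prod n :: (monom \<Rightarrow> 'k) set)"
    unfolding pp_prod_eq_ideal_prod_list idem_prod_eq_prodlist
    by (rule prodlist_idem_mem_ideal_prod_list) auto
qed

lemma pp_prod_subset_Inter: "pp_prod n \<subseteq> (\<Inter>i<n. loc_kernel n i :: (monom \<Rightarrow> 'k::field) set)"
proof -
  have "ideal_prod_list n [0..<n] \<subseteq> (loc_kernel n i :: (monom \<Rightarrow> 'k) set)" if "i < n" for i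
    by (rule ideal_prod_list_subset_loc_kernel) (use that in auto)
  then show ?thesis unfolding pp_prod_eq_ideal_prod_list by (intro INT_greatest) simp
qed

lemma Inter_subset_Ftens:
  assumes "n \<ge> 1"
  shows "(\<Inter>i<n. loc_kernel n i) \<subseteq> (Ftens n :: (monom \<Rightarrow> 'k::field) set)"
proof
  fix f :: "monom \<Rightarrow> 'k" assume f: "f \<in> (\<Inter>i<n. loc_kernel n i)"
  then have "f \<in> loc_kernel n 0" using assms by simp
  then have "f \<in> {f \<in> Sn n. \<forall>i<n. f \<in> loc_kernel n i}" using f loc_kernelD(1) by simp
  then show "f \<in> Ftens n" using Inter_loc_kernel_subset_Ftens by (rule subsetD[rotated])
qed

lemma prime_contains_loc_kernel:
  assumes n: "n \<ge> 1" and P: "is_prime n P" and nz: "P \<noteq> {(\<lambda>_. 0 :: 'k::field)}"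
  shows "\<exists>i<n. (loc_kernel n i :: (monom \<Rightarrow> 'k) set) \<subseteq> P"
proof -
  have I: "is_ideal n P" by (rule is_prime_is_ideal[OF P])
  obtain f where "f \<in> P" "f \<noteq> (\<lambda>_. 0)" using nz idealD(2)[OF I] by blast
  then have "Ftens n \<subseteq> P" by (intro Ftens_subset_ideal[OF I] idem_prod_mem_ideal[OF I])
  then have "ideal_prod_list n [0..<n] \<subseteq> P"
    unfolding pp_prod_eq_ideal_prod_list[symmetric]
    using pp_prod_subset_Inter Inter_subset_Ftens[OF n] by (meson subset_trans)
  then have "\<exists>i\<in>set [0..<n]. loc_kernel n i \<subseteq> P"
    by (intro prime_contains_factor_of_ideal_prod_list[OF P]) auto
  then show ?thesis by auto
qed

lemma height_geI:
  assumes "Q 0 = P" "\<forall>i\<le>k. is_prime n (Q i)" "\<forall>i<k. Q (Suc i) \<subset> Q i"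
  shows "enat k \<le> height n P"
  unfolding height_def by (rule SUP_upper) (use assms in blast)

lemma height_leI:
  assumes "\<And>k Q. Q 0 = P \<Longrightarrow> \<forall>i\<le>k. is_prime n (Q i) \<Longrightarrow> \<forall>i<k. Q (Suc i) \<subset> Q i \<Longrightarrow> k \<le> K"
  shows "height n P \<le> enat K"
  unfolding height_def by (rule SUP_least) (use assms in auto)

lemma two_le_height:
  assumes "is_prime n P" "is_prime n Q" "is_prime n R" "R \<subset> Q" "Q \<subset> P"
  shows "2 \<le> height n P"
proof -
  define C where "C = (\<lambda>t::nat. if t = 0 then P else if t = 1 then Q else R)"
  have "enat 2 \<le> height n P"
    by (rule height_geI[of C]) (use assms in \<open>auto simp: C_def le_Suc_eq less_Suc_eq numeral_2_eq_2\<close>)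
  then show ?thesis by (simp add: numeral_eq_enat)
qed

lemma height_loc_kernel:
  assumes n: "n \<ge> 1" and i: "i < n"
  shows "height n (loc_kernel n i :: (monom \<Rightarrow> 'k::field) set) = 1"
proof (rule antisym)
  define C where "C = (\<lambda>t::nat. if t = 0 then loc_kernel n i else {(\<lambda>_. 0 :: 'k)})"
  have "enat 1 \<le> height n (loc_kernel n i :: (monom \<Rightarrow> 'k) set)"
    by (rule height_geI[of C])
      (use is_prime_loc_kernel[OF i] is_prime_zero loc_kernel_neq_zero[OF i] in \<open>auto simp: C_def le_Suc_eq\<close>)
  then show "1 \<le> height n (loc_kernel n i :: (monom \<Rightarrow> 'k) set)" by (simp add: one_enat_def)
  have chain_bound: "k \<le> 1"
    if Q: "Q 0 = loc_kernel n i" "\<forall>t\<le>k. is_prime n (Q t)" "\<forall>t<k. Q (Suc t) \<subset> Q t"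
    for k and Q :: "nat \<Rightarrow> (monom \<Rightarrow> 'k) set"
  proof (rule ccontr)
    assume "\<not> k \<le> 1"
    then have Q21: "Q 2 \<subset> Q 1" and Q10: "Q 1 \<subset> loc_kernel n i" and prime: "is_prime n (Q 1)" "is_prime n (Q 2)"
      using Q by (auto simp: numeral_2_eq_2)
    have "(\<lambda>_. 0) \<in> Q 2" by (rule idealD(2)[OF is_prime_is_ideal[OF prime(2)]])
    then have "Q 1 \<noteq> {(\<lambda>_. 0)}" using Q21 by (metis psubset_eq subset_singletonD empty_iff)
    then obtain j where j: "j < n" "loc_kernel n j \<subseteq> Q 1"
      using prime_contains_loc_kernel[OF n prime(1)] by blast
    show False
    proof (cases "j = i")
      case True then show False using j Q10 by blast
    next
      case False then show False using j Q10 loc_kernel_not_subset[OF j(1) False] by blast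
    qed
  qed
  have "height n (loc_kernel n i :: (monom \<Rightarrow> 'k) set) \<le> enat 1"
    by (rule height_leI) (rule chain_bound)
  then show "height n (loc_kernel n i :: (monom \<Rightarrow> 'k) set) \<le> 1" by (simp add: one_enat_def)
qed

lemma height_one_imp_loc_kernel:
  assumes n: "n \<ge> 1" and P: "is_prime n (P :: (monom \<Rightarrow> 'k::field) set)" and h: "height n P = 1"
  shows "\<exists>i<n. P = loc_kernel n i"
proof -
  have "P \<noteq> {(\<lambda>_. 0)}"
  proof
    assume P0: "P = {(\<lambda>_. 0)}"
    have chain_bound: "k \<le> 0"
      if Q: "Q 0 = P" "\<forall>t\<le>k. is_prime n (Q t)" "\<forall>t<k. Q (Suc t) \<subset> Q t"
      for k and Q :: "nat \<Rightarrow> (monom \<Rightarrow> 'k) set"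
    proof (rule ccontr)
      assume "\<not> k \<le> 0"
      then have "is_prime n (Q 1)" "Q 1 \<subset> Q 0" using Q by auto
      moreover from this have "(\<lambda>_. 0) \<in> Q 1" by (intro idealD(2) is_prime_is_ideal)
      ultimately show False using Q(1) P0 by auto
    qed
    have "height n P \<le> enat 0" by (rule height_leI) (rule chain_bound)
    with h show False by (simp add: one_enat_def)
  qed
  then obtain i where i: "i < n" "loc_kernel n i \<subseteq> P" using prime_contains_loc_kernel[OF n P] by blast
  have "P = loc_kernel n i"
  proof (rule ccontr)
    assume "P \<noteq> loc_kernel n i"
    then have "loc_kernel n i \<subset> P" using i(2) by blast
    then have "2 \<le> height n P"
      by (rule two_le_height[OF P is_prime_loc_kernel[OF i(1)] is_prime_zero loc_kernel_neq_zero[OF i(1)]])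
    with h show False by (simp add: one_enat_def numeral_eq_enat)
  qed
  with i show ?thesis by blast
qed

lemma height_one_primes:
  assumes "n \<ge> 1"
  shows "{P :: (monom \<Rightarrow> 'k::field) set. is_prime n P \<and> height n P = 1} = {loc_kernel n i | i. i < n}"
  using height_one_imp_loc_kernel[OF assms] is_prime_loc_kernel height_loc_kernel[OF assms]
  by blast

theorem lemma4p2:
  fixes n :: nat
  assumes "n \<ge> 1"
  shows "{P :: (monom \<Rightarrow> 'k::field) set. is_prime n P \<and> height n P = 1} = {pp n i | i. i < n}
    \<and> inj_on (pp n :: nat \<Rightarrow> (monom \<Rightarrow> 'k::field) set) {..<n}
    \<and> (\<forall>i<n. \<forall>j<n. i \<noteq> j \<longrightarrow> \<not> (pp n i :: (monom \<Rightarrow> 'k::field) set) \<subseteq> pp n j)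
    \<and> (\<Inter>i<n. (pp n i :: (monom \<Rightarrow> 'k::field) set)) = pp_prod n
    \<and> (pp_prod n :: (monom \<Rightarrow> 'k::field) set) = Ftens n"
proof (intro conjI)
  have pp: "\<And>i. i < n \<Longrightarrow> pp n i = (loc_kernel n i :: (monom \<Rightarrow> 'k) set)"
    by (rule pp_eq_loc_kernel)
  show "{P :: (monom \<Rightarrow> 'k) set. is_prime n P \<and> height n P = 1} = {pp n i | i. i < n}"
    unfolding height_one_primes[OF assms] by (intro Collect_cong) (use pp in auto)
  show incomparable: "\<forall>i<n. \<forall>j<n. i \<noteq> j \<longrightarrow> \<not> (pp n i :: (monom \<Rightarrow> 'k) set) \<subseteq> pp n j"
    by (simp add: pp loc_kernel_not_subset)
  then show "inj_on (pp n :: nat \<Rightarrow> (monom \<Rightarrow> 'k) set) {..<n}"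
    by (intro inj_onI) blast
  have Inter: "(\<Inter>i<n. pp n i :: (monom \<Rightarrow> 'k) set) = (\<Inter>i<n. loc_kernel n i)"
    by (simp add: pp)
  have "pp_prod n \<subseteq> (\<Inter>i<n. loc_kernel n i :: (monom \<Rightarrow> 'k) set)"
    "(\<Inter>i<n. loc_kernel n i) \<subseteq> (Ftens n :: (monom \<Rightarrow> 'k) set)" "Ftens n \<subseteq> (pp_prod n :: (monom \<Rightarrow> 'k) set)"
    by (rule pp_prod_subset_Inter Inter_subset_Ftens[OF assms] Ftens_subset_pp_prod)+
  then show "(\<Inter>i<n. pp n i :: (monom \<Rightarrow> 'k) set) = pp_prod n" "(pp_prod n :: (monom \<Rightarrow> 'k) set) = Ftens n"
    unfolding Inter by auto
qed

end
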